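(* Let $\rho_1\ge 2$, let $\theta\in\Theta^+$ satisfy $\|\theta\|_1<1$, and let $m\in\mathcal M_1$. Then the minimum of $\gamma$ over the linear space $\Theta_m$ is attained at a point of $\Theta^+_{m,2}$. Consequently $$\theta_{m,\rho_1}=\arg\min_{\theta'\in\Theta_m}\gamma(\theta')\quad\text{and}\quad \gamma(\theta_{m,\rho_1})=\mathrm{Var}_\theta\big(X[0,0]\,\big|\,X_m\big),$$ and moreover $\|\theta_{m,\rho_1}\|_1\le\|\theta\|_1$. The same statements hold for $\theta^{\rm iso}_{m,\rho_1}$ (with $\Theta_m$ replaced by $\Theta^{\rm iso}_m$) when $\theta\in\Theta^{+,\rm iso}$ and $\|\theta\|_1<1$.
   Context: Let $p\ge 2$ be an integer. $\Lambda=\{0,\dots,p-1\}^2$ is the $p\times p$ discrete torus; indices of $p\times p$ arrays are taken modulo $p$. $X=(X[i,j])_{(i,j)\in\Lambda}$ is a centered Gaussian random field, stationary on the torus, with nonsingular covariance; $X^v\in\mathbb R^{p^2}$ is its vectorization $X^v[ip+j+1]=X[i,j]$ and $\Sigma$ the covariance of $X^v$. For $m\subset\Lambda$, $X_m=(X[i,j])_{(i,j)\in m}$. $\Theta$ is the vector space of real $p\times p$ arrays $\theta$ indexed by $\Lambda$ with $\theta[0,0]=0$ and $\theta[i,j]=\theta[-i,-j]$ for all $(i,j)$. $C(\theta)$ is the $p^2\times p^2$ matrix with $C(\theta)[i_1p+j_1+1,\,i_2p+j_2+1]=\theta[i_2-i_1,j_2-j_1]$. $\Theta^+=\{\theta\in\Theta: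 I_{p^2}-C(\theta)\text{ is positive definite}\}$. The law of $X$ is parametrized by a unique $\theta\in\Theta^+$ and $\sigma^2>0$ with $\Sigma=\sigma^2(I_{p^2}-C(\theta))^{-1}$; $\mathrm{Var}_\theta,\mathbb E_\theta$ refer to this law ($\sigma^2$ fixed). Loss: $l(\theta_1,\theta_2)=p^{-2}\,\mathrm{tr}\big[(C(\theta_1)-C(\theta_2))\Sigma(C(\theta_1)-C(\theta_2))\big]$. Population contrast: for $\theta'\in\Theta$, $\gamma(\theta')=\mathbb E_\theta\big[\big(X[0,0]-\sum_{(i,j)\neq(0,0)}\theta'[i,j]X[i,j]\big)^2\big]$ (so $\gamma(\theta')-\gamma(\theta)=l(\theta',\theta)$). Models: toroidal norm $|(i,j)|_t^2=(i\wedge(p-i))^2+(j\wedge(p-j))^2$; for $r\ge0$, $m(r)=\{(i,j)\in\Lambda\setminus\{(0,0)\}:|(i,j)|_t\le r\}$; $\mathcal M_1$ is the collection of the distinct sets $m(r)$. For $m\in\mathcal M_1$: $\Theta_m=\{\theta\in\Theta:\theta[i,j]=0\ \forall(i,j)\notin m\}$, $\Theta^+_m=\Theta_m\cap\Theta^+$, $\Theta^+_{m,\rho}=\{\theta\in\Theta^+_m:\varphi_{\max}(I_{p^2}-C(\theta))<\rho\}$. For $\rho_1\ge2$, $\theta_{m,\rho_1}$ is the minimizer of $\theta'\mapsto l(\theta',\theta)$ over the closure $\overline{\Theta^+_{m,\rho_1}}$. Isotropic versions: $G$ is the group of the 8 isometries of the square acting on $\Lambda$ (generated by $(i,j)\mapsto(j,i)$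 and $(i,j)\mapsto(-i,j)$, mod $p$). $\Theta^{\rm iso}=\{\theta\in\Theta:\theta[g.(i,j)]=\theta[i,j]\ \forall g\in G,(i,j)\}$, $\Theta^{\rm iso}_m=\Theta_m\cap\Theta^{\rm iso}$, $\Theta^{+,\rm iso}=\Theta^+\cap\Theta^{\rm iso}$, $\Theta^{+,\rm iso}_{m,\rho}=\Theta^+_{m,\rho}\cap\Theta^{\rm iso}$, and $\theta^{\rm iso}_{m,\rho_1}$ is the minimizer of $l(\cdot,\theta)$ over $\overline{\Theta^{+,\rm iso}_{m,\rho_1}}$. $\|\theta\|_1=\sum_{(i,j)}|\theta[i,j]|$; $\varphi_{\max}$ is the largest eigenvalue. *)

theory Defs
  imports "HOL-Analysis.Analysis" "Jordan_Normal_Form.Char_Poly" "Jordan_Normal_Form.DL_Submatrix"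
begin

text \<open>Arrays indexed by the torus Lambda = {0..<p} x {0..<p} are functions nat x nat => real
  that vanish outside Lambda. Vectorization is 0-based: (i,j) |-> i*p+j.\<close>

definition Lam :: "nat \<Rightarrow> (nat \<times> nat) set" where
  "Lam p = {0..<p} \<times> {0..<p}"

definition md :: "nat \<Rightarrow> int \<Rightarrow> nat" where
  "md p a = nat (a mod int p)"

definition Theta :: "nat \<Rightarrow> (nat \<times> nat \<Rightarrow> real) set" where
  "Theta p = {\<theta>. (\<forall>x. x \<notin> Lam p \<longrightarrow> \<theta> x = 0) \<and> \<theta> (0,0) = 0 \<and>
      (\<forall>i j. (i,j) \<in> Lam p \<longrightarrow> \<theta> (i,j) = \<theta> (md p (- int i), md p (- int j)))}"

definition Cmat :: "nat \<Rightarrow> (nat \<times> nat \<Rightarrow> real) \<Rightarrow> real mat" where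
  "Cmat p \<theta> = mat (p*p) (p*p) (\<lambda>(r,s).
      \<theta> (md p (int (s div p) - int (r div p)), md p (int (s mod p) - int (r mod p))))"

definition pos_def_mat :: "real mat \<Rightarrow> bool" where
  "pos_def_mat A = (A \<in> carrier_mat (dim_row A) (dim_row A) \<and>
      (\<forall>v \<in> carrier_vec (dim_row A). v \<noteq> 0\<^sub>v (dim_row A) \<longrightarrow> v \<bullet> (A *\<^sub>v v) > 0))"

definition phi_max :: "real mat \<Rightarrow> real" where
  "phi_max A = Max {k. eigenvalue A k}"

definition IminusC :: "nat \<Rightarrow> (nat \<times> nat \<Rightarrow> real) \<Rightarrow> real mat" where
  "IminusC p \<theta> = 1\<^sub>m (p*p) - Cmat p \<theta>"

definition ThetaPlus :: "nat \<Rightarrow> (nat \<times> nat \<Rightarrow> real) set" where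
  "ThetaPlus p = {\<theta> \<in> Theta p. pos_def_mat (IminusC p \<theta>)}"

definition minv :: "real mat \<Rightarrow> real mat" where
  "minv A = (SOME B. B \<in> carrier_mat (dim_row A) (dim_row A) \<and> A * B = 1\<^sub>m (dim_row A)
                     \<and> B * A = 1\<^sub>m (dim_row A))"

text \<open>covariance of the vectorized field: Sigma = sigma^2 (I - C(theta))^{-1}\<close>
definition CovS :: "nat \<Rightarrow> real \<Rightarrow> (nat \<times> nat \<Rightarrow> real) \<Rightarrow> real mat" where
  "CovS p s2 \<theta> = s2 \<cdot>\<^sub>m minv (IminusC p \<theta>)"

definition vecz :: "nat \<Rightarrow> (nat \<times> nat \<Rightarrow> real) \<Rightarrow> real vec" where
  "vecz p a = vec (p*p) (\<lambda>r. a (r div p, r mod p))"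

definition mtrace :: "real mat \<Rightarrow> real" where
  "mtrace A = (\<Sum>i<dim_row A. A $$ (i,i))"

text \<open>loss l(theta1, theta2) where theta is the true parameter\<close>
definition loss :: "nat \<Rightarrow> real \<Rightarrow> (nat \<times> nat \<Rightarrow> real) \<Rightarrow> (nat \<times> nat \<Rightarrow> real)
    \<Rightarrow> (nat \<times> nat \<Rightarrow> real) \<Rightarrow> real" where
  "loss p s2 \<theta> \<theta>1 \<theta>2 = (1 / (real p)^2) *
     mtrace ((Cmat p \<theta>1 - Cmat p \<theta>2) * CovS p s2 \<theta> * (Cmat p \<theta>1 - Cmat p \<theta>2))"

text \<open>population contrast gamma(theta') = E[(X[0,0] - sum theta'[i,j] X[i,j])^2]
  = a^T Sigma a  with a[0,0] = 1, a[i,j] = - theta'[i,j] otherwise\<close>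
definition gamma :: "nat \<Rightarrow> real \<Rightarrow> (nat \<times> nat \<Rightarrow> real) \<Rightarrow> (nat \<times> nat \<Rightarrow> real) \<Rightarrow> real" where
  "gamma p s2 \<theta> \<theta>' = (let a = vecz p (\<lambda>x. if x = (0,0) then 1 else - \<theta>' x)
                      in a \<bullet> (CovS p s2 \<theta> *\<^sub>v a))"

text \<open>Var(X[0,0] | X_m) for the centered Gaussian vector with covariance Sigma
  (Gaussian conditioning / Schur complement formula)\<close>
definition cond_var :: "nat \<Rightarrow> real \<Rightarrow> (nat \<times> nat \<Rightarrow> real) \<Rightarrow> (nat \<times> nat) set \<Rightarrow> real" where
  "cond_var p s2 \<theta> m = (let S = CovS p s2 \<theta>; M = (\<lambda>(i,j). i*p+j) ` m in
      S $$ (0,0) - (submatrix S {0} M * minv (submatrix S M M) * submatrix S M {0}) $$ (0,0))"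

definition norm1 :: "nat \<Rightarrow> (nat \<times> nat \<Rightarrow> real) \<Rightarrow> real" where
  "norm1 p \<theta> = (\<Sum>x\<in>Lam p. \<bar>\<theta> x\<bar>)"

definition tnorm2 :: "nat \<Rightarrow> nat \<times> nat \<Rightarrow> nat" where
  "tnorm2 p x = (min (fst x) (p - fst x))^2 + (min (snd x) (p - snd x))^2"

definition mball :: "nat \<Rightarrow> real \<Rightarrow> (nat \<times> nat) set" where
  "mball p r = {x \<in> Lam p - {(0,0)}. sqrt (real (tnorm2 p x)) \<le> r}"

definition M1 :: "nat \<Rightarrow> (nat \<times> nat) set set" where
  "M1 p = {mball p r | r. r \<ge> 0}"

definition Theta_m :: "nat \<Rightarrow> (nat \<times> nat) set \<Rightarrow> (nat \<times> nat \<Rightarrow> real) set" where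
  "Theta_m p m = {\<theta> \<in> Theta p. \<forall>x. x \<notin> m \<longrightarrow> \<theta> x = 0}"

definition ThetaPlus_m :: "nat \<Rightarrow> (nat \<times> nat) set \<Rightarrow> (nat \<times> nat \<Rightarrow> real) set" where
  "ThetaPlus_m p m = Theta_m p m \<inter> ThetaPlus p"

definition ThetaPlus_m_rho :: "nat \<Rightarrow> (nat \<times> nat) set \<Rightarrow> real \<Rightarrow> (nat \<times> nat \<Rightarrow> real) set" where
  "ThetaPlus_m_rho p m \<rho> = {\<theta> \<in> ThetaPlus_m p m. phi_max (IminusC p \<theta>) < \<rho>}"

definition G_iso :: "nat \<Rightarrow> (nat \<times> nat \<Rightarrow> nat \<times> nat) set" where
  "G_iso p = (let n = (\<lambda>i. md p (- int i)) in
     {\<lambda>(i,j). (i,j), \<lambda>(i,j). (j,i), \<lambda>(i,j). (n i, j), \<lambda>(i,j). (i, n j),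
      \<lambda>(i,j). (n i, n j), \<lambda>(i,j). (j, n i), \<lambda>(i,j). (n j, i), \<lambda>(i,j). (n j, n i)})"

definition Theta_iso :: "nat \<Rightarrow> (nat \<times> nat \<Rightarrow> real) set" where
  "Theta_iso p = {\<theta> \<in> Theta p. \<forall>g \<in> G_iso p. \<forall>x \<in> Lam p. \<theta> (g x) = \<theta> x}"

definition is_argmin_on :: "('a \<Rightarrow> real) \<Rightarrow> 'a set \<Rightarrow> 'a \<Rightarrow> bool" where
  "is_argmin_on f S x = (x \<in> S \<and> (\<forall>y \<in> S. f x \<le> f y))"

definition theta_proj :: "nat \<Rightarrow> real \<Rightarrow> (nat \<times> nat \<Rightarrow> real) \<Rightarrow> (nat \<times> nat \<Rightarrow> real) set
    \<Rightarrow> (nat \<times> nat \<Rightarrow> real)" where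
  "theta_proj p s2 \<theta> S = (THE t. is_argmin_on (\<lambda>t'. loss p s2 \<theta> t' \<theta>) (closure S) t)"

end

theory Submission
  imports Defs
begin

text \<open>
  Write \<open>Q = I - C(\<theta>)\<close>, so \<open>\<Sigma> = \<sigma>\<^sup>2 Q\<^sup>-\<^sup>1\<close>. The minimiser \<open>\<beta>\<close> of \<open>\<gamma>\<close> over the linear
  space \<open>\<Theta>\<^sub>m\<close> is the least-squares regression of \<open>X[0,0]\<close> on \<open>X\<^sub>m\<close>; Pythagoras gives
  \<open>\<gamma>(t) = \<gamma>(\<beta>) + \<parallel>t - \<beta>\<parallel>\<^sub>\<Sigma>\<^sup>2\<close> on \<open>\<Theta>\<^sub>m\<close>, which yields uniqueness, the conditional-variance
  formula, and (since \<open>l(t,\<theta>) = \<gamma>(t) - \<gamma>(\<theta>)\<close> by stationarity) identifies \<beta> with the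
  projection \<open>\<theta>\<^sub>m\<^sub>,\<^sub>\<rho>\<^sub>1\<close> as soon as \<beta> lies in \<open>\<Theta>\<^sup>+\<^sub>m\<^sub>,\<^sub>2\<close>.
  For the latter, let \<open>a = e\<^sub>0 - \<beta>\<close> and \<open>v = Q\<^sup>-\<^sup>1 a\<close>. The normal equations say that \<open>v\<close>
  vanishes on \<open>m\<close>, while \<open>a\<close> vanishes off \<open>m \<union> {0}\<close>; reading \<open>Q v = a\<close> row by row and
  using that every row and column of \<open>C(\<theta>)\<close> has \<open>\<ell>\<^sub>1\<close>-norm \<open>\<parallel>\<theta>\<parallel>\<^sub>1 < 1\<close> gives
  \<open>\<parallel>\<beta>\<parallel>\<^sub>1 \<le> \<parallel>\<theta>\<parallel>\<^sub>1\<close>. A Schur-test bound then shows that all eigenvalues of \<open>I - C(\<beta>)\<close> lie in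
  \<open>(0, 2)\<close>. Finally \<beta> inherits every symmetry of the square that fixes \<theta> and the ball
  \<open>m\<close>, because such a symmetry maps the regression problem to itself and \<beta> is unique.
\<close>

section \<open>Arithmetic on the discrete torus\<close>

lemma md_less: "0 < p \<Longrightarrow> md p a < p"
  unfolding md_def by (simp add: nat_less_iff)

lemma of_nat_md: "0 < p \<Longrightarrow> int (md p a) = a mod int p"
  unfolding md_def using pos_mod_sign[of "int p" a] by simp

lemma md_of_nat: "i < p \<Longrightarrow> md p (int i) = i"
  unfolding md_def by (simp flip: of_nat_mod)

lemma md_eq_iff: "0 < p \<Longrightarrow> md p a = md p b \<longleftrightarrow> a mod int p = b mod int p"
  using of_nat_md[of p a] of_nat_md[of p b] by (metis of_nat_eq_iff)

lemma md_uminus_md: assumes p: "0 < p" shows "md p (- int (md p d)) = md p (- d)"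
proof -
  have "(- int (md p d)) mod int p = (- d) mod int p" unfolding of_nat_md[OF p] by (rule mod_minus_eq)
  thus ?thesis unfolding md_def by simp
qed

lemma md_diff_translate: assumes p: "0 < p"
  shows "md p (int (md p (x + a)) - int (md p (y + a))) = md p (x - y)"
proof -
  have "(int (md p (x + a)) - int (md p (y + a))) mod int p = ((x + a) mod int p - (y + a) mod int p) mod int p"
    unfolding of_nat_md[OF p] ..
  also have "\<dots> = ((x + a) - (y + a)) mod int p" by (rule mod_diff_eq)
  also have "\<dots> = (x - y) mod int p" by simp
  finally show ?thesis unfolding md_def by simp
qed

lemma md_translate_back: assumes p: "0 < p" and x: "x < p"
  shows "md p (int (md p (int x + a)) - a) = x"
proof -
  have "(int (md p (int x + a)) - a) mod int p = int x mod int p"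
    unfolding of_nat_md[OF p] by (simp add: mod_diff_left_eq)
  thus ?thesis using x unfolding md_def by simp
qed

lemma md_translate_back_neg: assumes p: "0 < p"
  shows "md p (a - int (md p (int x + a))) = md p (- int x)"
proof -
  have "(a - int (md p (int x + a))) mod int p = (a - (int x + a)) mod int p"
    unfolding of_nat_md[OF p] by (simp add: mod_diff_right_eq)
  thus ?thesis unfolding md_def by simp
qed

lemma bij_betw_md_affine:
  assumes p: "0 < p" and c: "c = 1 \<or> c = -1"
  shows "bij_betw (\<lambda>i. md p (c * int i + a)) {0..<p} {0..<p}"
proof -
  have "inj_on (\<lambda>i. md p (c * int i + a)) {0..<p}"
  proof (rule inj_onI)
    fix i j assume i: "i \<in> {0..<p}" and j: "j \<in> {0..<p}"
      and "md p (c * int i + a) = md p (c * int j + a)"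
    hence "(c * int i + a) mod int p = (c * int j + a) mod int p" using md_eq_iff[OF p] by blast
    hence "(c * int i) mod int p = (c * int j) mod int p" by (metis add_diff_cancel_right' mod_diff_left_eq)
    hence "(c * (c * int i)) mod int p = (c * (c * int j)) mod int p" by (metis mod_mult_right_eq)
    hence "int i mod int p = int j mod int p" using c by auto
    thus "i = j" using i j by (simp add: zmod_int[symmetric])
  qed
  moreover have "(\<lambda>i. md p (c * int i + a)) ` {0..<p} \<subseteq> {0..<p}" using md_less[OF p] by auto
  ultimately show ?thesis unfolding bij_betw_def by (simp add: endo_inj_surj)
qed

lemma sum_md_affine:
  assumes "0 < p" and "c = 1 \<or> c = -1"
  shows "(\<Sum>i<p. g (md p (c * int i + a))) = (\<Sum>i<p. g i)"
  using sum.reindex_bij_betw[OF bij_betw_md_affine[OF assms, of a], of g] by (simp add: lessThan_atLeast0)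

lemma sum_Lam: "(\<Sum>x\<in>Lam p. f x) = (\<Sum>i<p. \<Sum>j<p. f (i,j))"
  unfolding Lam_def by (simp add: sum.cartesian_product lessThan_atLeast0)

lemma div_mod_less: fixes r p :: nat assumes r: "r < p*p" shows "r div p < p \<and> r mod p < p"
proof -
  have p: "0 < p" using r by (cases p) auto
  show ?thesis using r p by (simp add: less_mult_imp_div_less)
qed

lemma div_mod_in_Lam: "r < p*p \<Longrightarrow> (r div p, r mod p) \<in> Lam p"
  using div_mod_less unfolding Lam_def by auto

lemma vec_index_less: "(i,j) \<in> Lam p \<Longrightarrow> i*p+j < p*p"
proof -
  assume "(i,j) \<in> Lam p"
  hence a: "i < p" "j < p" unfolding Lam_def by auto
  hence "i*p + j < (i+1)*p" by simp
  also have "\<dots> \<le> p*p" using a by (metis Suc_eq_plus1 Suc_leI mult_le_mono1)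
  finally show ?thesis .
qed

lemma vec_index_div_mod: "(i,j) \<in> Lam p \<Longrightarrow> (i*p+j) div p = i \<and> (i*p+j) mod p = j"
  unfolding Lam_def by auto

lemma div_mod_eq_zero_iff: fixes r p :: nat shows "0 < p \<Longrightarrow> (r div p, r mod p) = (0,0) \<longleftrightarrow> r = 0"
  by (metis div_mult_mod_eq add_0 mult_0 prod.inject div_0 mod_0)

lemma bij_betw_div_mod_Lam: "bij_betw (\<lambda>r. (r div p, r mod p)) {..<p*p} (Lam p)"
proof (rule bij_betw_byWitness[where f' = "\<lambda>(i,j). i*p+j"])
  show "(\<lambda>r. (r div p, r mod p)) ` {..<p * p} \<subseteq> Lam p" using div_mod_in_Lam by auto
  show "(\<lambda>(i, j). i * p + j) ` Lam p \<subseteq> {..<p * p}" using vec_index_less by auto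
qed (auto simp: Lam_def)

lemma sum_div_mod_Lam: "(\<Sum>r<p*p. f (r div p, r mod p)) = (\<Sum>x\<in>Lam p. f x)"
  using sum.reindex_bij_betw[OF bij_betw_div_mod_Lam, of f] by simp

lemma sum_translate_Lam:
  assumes p: "0 < p"
  shows "(\<Sum>s<p*p. f (md p (int (s div p) - a), md p (int (s mod p) - b))) = (\<Sum>x\<in>Lam p. f x)"
proof -
  have "(\<Sum>s<p*p. f (md p (int (s div p) - a), md p (int (s mod p) - b)))
     = (\<Sum>i<p. \<Sum>j<p. f (md p (1 * int i + - a), md p (1 * int j + - b)))"
    using sum_div_mod_Lam[of "\<lambda>(i,j). f (md p (int i - a), md p (int j - b))" p] by (simp add: sum_Lam)
  also have "\<dots> = (\<Sum>i<p. \<Sum>j<p. f (md p (1 * int i + - a), j))"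
    by (rule sum.cong[OF refl], rule sum_md_affine[OF p, of 1 "\<lambda>j. f (_, j)"], simp)
  also have "\<dots> = (\<Sum>i<p. \<Sum>j<p. f (i, j))"
    by (rule sum_md_affine[OF p, of 1 "\<lambda>i. \<Sum>j<p. f (i, j)"], simp)
  finally show ?thesis by (simp add: sum_Lam)
qed

lemma sum_reflect_Lam:
  assumes p: "0 < p"
  shows "(\<Sum>s<p*p. f (md p (a - int (s div p)), md p (b - int (s mod p)))) = (\<Sum>x\<in>Lam p. f x)"
proof -
  have "(\<Sum>s<p*p. f (md p (a - int (s div p)), md p (b - int (s mod p))))
     = (\<Sum>i<p. \<Sum>j<p. f (md p (-1 * int i + a), md p (-1 * int j + b)))"
    using sum_div_mod_Lam[of "\<lambda>(i,j). f (md p (a - int i), md p (b - int j))" p] by (simp add: sum_Lam)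
  also have "\<dots> = (\<Sum>i<p. \<Sum>j<p. f (md p (-1 * int i + a), j))"
    by (rule sum.cong[OF refl], rule sum_md_affine[OF p, of "-1" "\<lambda>j. f (_, j)"], simp)
  also have "\<dots> = (\<Sum>i<p. \<Sum>j<p. f (i, j))"
    by (rule sum_md_affine[OF p, of "-1" "\<lambda>i. \<Sum>j<p. f (i, j)"], simp)
  finally show ?thesis by (simp add: sum_Lam)
qed

section \<open>Matrices and quadratic forms\<close>

lemma index_mult_mat_sum:
  assumes "A \<in> carrier_mat nr n" "B \<in> carrier_mat n nc" "i < nr" "j < nc"
  shows "(A * B) $$ (i,j) = (\<Sum>c<n. A $$ (i,c) * B $$ (c,j))"
  using assms by (simp add: scalar_prod_def lessThan_atLeast0)

lemma scalar_prod_mult_mat_vec_sum: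
  assumes "A \<in> carrier_mat n n" "v \<in> carrier_vec n" "w \<in> carrier_vec n"
  shows "w \<bullet> (A *\<^sub>v v) = (\<Sum>i<n. \<Sum>j<n. w $ i * A $$ (i,j) * v $ j)"
  using assms by (simp add: scalar_prod_def lessThan_atLeast0 sum_distrib_left mult.assoc)

lemma sum_squares_pos_vec:
  fixes v :: "real vec"
  assumes "v \<in> carrier_vec n" "v \<noteq> 0\<^sub>v n"
  shows "(\<Sum>r<n. (v $ r)^2) > 0"
proof -
  obtain r where r: "r < n" "v $ r \<noteq> 0" using assms by (metis eq_vecI carrier_vecD index_zero_vec)
  have "(\<Sum>r<n. (v $ r)^2) \<ge> (v $ r)^2" using r by (intro member_le_sum) auto
  moreover have "(v $ r)^2 > 0" using r by simp
  ultimately show ?thesis by linarith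
qed

lemma minv_pos_def:
  fixes A :: "real mat"
  assumes A: "A \<in> carrier_mat n n"
    and pd: "\<forall>v\<in>carrier_vec n. v \<noteq> 0\<^sub>v n \<longrightarrow> v \<bullet> (A *\<^sub>v v) > 0"
  shows "minv A \<in> carrier_mat n n \<and> A * minv A = 1\<^sub>m n \<and> minv A * A = 1\<^sub>m n"
proof -
  have "det A \<noteq> 0"
  proof
    assume "det A = 0"
    then obtain v where v: "v \<in> carrier_vec n" "v \<noteq> 0\<^sub>v n" "A *\<^sub>v v = 0\<^sub>v n"
      using det_0_iff_vec_prod_zero[OF A] by blast
    with pd have "v \<bullet> (A *\<^sub>v v) > 0" by blast
    with v show False by simp
  qed
  from det_non_zero_imp_unit[OF A this, of undefined]
  have "\<exists>B. B \<in> carrier_mat (dim_row A) (dim_row A) \<and> A * B = 1\<^sub>m (dim_row A) \<and> B * A = 1\<^sub>m (dim_row A)"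
    using A unfolding Units_def ring_mat_simps by auto
  from someI_ex[OF this] show ?thesis using A unfolding minv_def by auto
qed

lemma left_inverse_unique_entrywise:
  fixes A K K' :: "real mat"
  assumes A: "A \<in> carrier_mat n n" and K: "K \<in> carrier_mat n n" and KA: "K * A = 1\<^sub>m n"
    and K': "K' \<in> carrier_mat n n"
    and AK': "\<And>i j. i < n \<Longrightarrow> j < n \<Longrightarrow> (\<Sum>k<n. A $$ (i,k) * K' $$ (k,j)) = (if i = j then 1 else 0)"
  shows "K' = K"
proof -
  have "A * K' = 1\<^sub>m n"
    using A K' AK' index_mult_mat_sum[OF A K'] by (intro eq_matI) auto
  hence "K * (A * K') = K" using K by simp
  thus ?thesis using K' KA assoc_mult_mat[OF K A K'] by simp
qed

lemma inverse_mat_permute: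
  fixes A K :: "real mat"
  assumes A: "A \<in> carrier_mat n n" and K: "K \<in> carrier_mat n n"
    and AK: "A * K = 1\<^sub>m n" and KA: "K * A = 1\<^sub>m n"
    and \<pi>: "bij_betw \<pi> {..<n} {..<n}"
    and A_\<pi>: "\<And>i j. i < n \<Longrightarrow> j < n \<Longrightarrow> A $$ (\<pi> i, \<pi> j) = A $$ (i,j)"
    and ij: "i < n" "j < n"
  shows "K $$ (\<pi> i, \<pi> j) = K $$ (i,j)"
proof -
  have \<pi>_less: "\<And>i. i < n \<Longrightarrow> \<pi> i < n" and \<pi>_inj: "inj_on \<pi> {..<n}"
    using \<pi> unfolding bij_betw_def by auto
  have "mat n n (\<lambda>(i,j). K $$ (\<pi> i, \<pi> j)) = K"
  proof (rule left_inverse_unique_entrywise[OF A K KA])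
    fix i j assume i: "i < n" and j: "j < n"
    have "(\<Sum>k<n. A $$ (i,k) * mat n n (\<lambda>(i,j). K $$ (\<pi> i, \<pi> j)) $$ (k,j))
        = (\<Sum>k<n. A $$ (\<pi> i, \<pi> k) * K $$ (\<pi> k, \<pi> j))"
      by (rule sum.cong) (auto simp: A_\<pi> i j)
    also have "\<dots> = (\<Sum>k<n. A $$ (\<pi> i, k) * K $$ (k, \<pi> j))"
      using sum.reindex_bij_betw[OF \<pi>, of "\<lambda>k. A $$ (\<pi> i, k) * K $$ (k, \<pi> j)"] by simp
    also have "\<dots> = (A * K) $$ (\<pi> i, \<pi> j)"
      using index_mult_mat_sum[OF A K \<pi>_less[OF i] \<pi>_less[OF j]] by simp
    also have "\<dots> = (if i = j then 1 else 0)"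
      using AK \<pi>_less[OF i] \<pi>_less[OF j] \<pi>_inj i j by (auto simp: inj_on_def)
    finally show "(\<Sum>k<n. A $$ (i,k) * mat n n (\<lambda>(i,j). K $$ (\<pi> i, \<pi> j)) $$ (k,j)) = (if i = j then 1 else 0)" .
  qed simp
  thus ?thesis using ij by (metis index_mat(1) case_prod_conv)
qed

lemma inverse_mat_symmetric:
  fixes A K :: "real mat"
  assumes A: "A \<in> carrier_mat n n" and K: "K \<in> carrier_mat n n" and KA: "K * A = 1\<^sub>m n"
    and sym: "\<And>i j. i < n \<Longrightarrow> j < n \<Longrightarrow> A $$ (j, i) = A $$ (i,j)"
    and ij: "i < n" "j < n"
  shows "K $$ (j, i) = K $$ (i,j)"
proof -
  have "mat n n (\<lambda>(i,j). K $$ (j, i)) = K"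
  proof (rule left_inverse_unique_entrywise[OF A K KA])
    fix i j assume i: "i < n" and j: "j < n"
    have "(\<Sum>k<n. A $$ (i,k) * mat n n (\<lambda>(i,j). K $$ (j, i)) $$ (k,j)) = (\<Sum>k<n. K $$ (j, k) * A $$ (k, i))"
      by (rule sum.cong) (auto simp: sym i j)
    also have "\<dots> = (K * A) $$ (j, i)" using index_mult_mat_sum[OF K A j i] by simp
    also have "\<dots> = (if i = j then 1 else 0)" using KA i j by auto
    finally show "(\<Sum>k<n. A $$ (i,k) * mat n n (\<lambda>(i,j). K $$ (j, i)) $$ (k,j)) = (if i = j then 1 else 0)" .
  qed simp
  thus ?thesis using ij by (metis index_mat(1) case_prod_conv)
qed

definition qform :: "nat \<Rightarrow> real mat \<Rightarrow> (nat \<Rightarrow> real) \<Rightarrow> (nat \<Rightarrow> real) \<Rightarrow> real" where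
  "qform n A x y = (\<Sum>i<n. \<Sum>j<n. x i * A $$ (i,j) * y j)"

lemma qform_row: "qform n A x y = (\<Sum>i<n. x i * (\<Sum>j<n. A $$ (i,j) * y j))"
  unfolding qform_def by (simp add: sum_distrib_left mult.assoc)

lemma qform_cong:
  "(\<And>r. r < n \<Longrightarrow> x r = x' r) \<Longrightarrow> (\<And>r. r < n \<Longrightarrow> y r = y' r) \<Longrightarrow> qform n A x y = qform n A x' y'"
  unfolding qform_def by (intro sum.cong) auto

lemma qform_diff:
  "qform n A (\<lambda>r. x r - y r) (\<lambda>r. x r - y r) = qform n A x x - qform n A x y - qform n A y x + qform n A y y"
  unfolding qform_def by (simp add: algebra_simps sum.distrib sum_subtractf)

lemma qform_commute:
  assumes "\<And>i j. i < n \<Longrightarrow> j < n \<Longrightarrow> A $$ (j,i) = A $$ (i,j)"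
  shows "qform n A x y = qform n A y x"
  unfolding qform_def
  by (subst sum.swap, intro sum.cong refl) (simp add: assms mult.commute mult.left_commute)

lemma qform_eq_scalar_prod: "A \<in> carrier_mat n n \<Longrightarrow> qform n A x y = vec n x \<bullet> (A *\<^sub>v vec n y)"
  unfolding qform_def by (subst scalar_prod_mult_mat_vec_sum[of A n]) auto

section \<open>Circulant matrices\<close>

definition tdiff :: "nat \<Rightarrow> nat \<times> nat \<Rightarrow> nat \<times> nat \<Rightarrow> nat \<times> nat" where
  "tdiff p x y = (md p (int (fst y) - int (fst x)), md p (int (snd y) - int (snd x)))"

definition circ :: "nat \<Rightarrow> (nat \<times> nat \<Rightarrow> real) \<Rightarrow> nat \<Rightarrow> nat \<Rightarrow> real" where
  "circ p f r s = f (tdiff p (r div p, r mod p) (s div p, s mod p))"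

lemma circ_eq:
  "circ p f r s = f (md p (int (s div p) - int (r div p)), md p (int (s mod p) - int (r mod p)))"
  unfolding circ_def tdiff_def by simp

lemma Cmat_carrier: "Cmat p f \<in> carrier_mat (p*p) (p*p)"
  unfolding Cmat_def by simp

lemma Cmat_index: "r < p*p \<Longrightarrow> s < p*p \<Longrightarrow> Cmat p f $$ (r,s) = circ p f r s"
  unfolding Cmat_def circ_eq by simp

lemma IminusC_carrier: "IminusC p f \<in> carrier_mat (p*p) (p*p)"
  unfolding IminusC_def by (rule minus_carrier_mat[OF Cmat_carrier])

lemma IminusC_index:
  "r < p*p \<Longrightarrow> s < p*p \<Longrightarrow> IminusC p f $$ (r,s) = (if r = s then 1 else 0) - circ p f r s"
  unfolding IminusC_def using Cmat_carrier[of p f] by (simp add: Cmat_index)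

lemma Theta_symmetric:
  "f \<in> Theta p \<Longrightarrow> (i,j) \<in> Lam p \<Longrightarrow> f (md p (- int i), md p (- int j)) = f (i,j)"
  unfolding Theta_def by auto

lemma Theta_symmetric_diff:
  assumes f: "f \<in> Theta p" and p: "0 < p"
  shows "f (md p (a - b), md p (c - d)) = f (md p (b - a), md p (d - c))"
proof -
  have "(md p (b - a), md p (d - c)) \<in> Lam p" using md_less[OF p] unfolding Lam_def by auto
  from Theta_symmetric[OF f this] show ?thesis by (simp add: md_uminus_md[OF p])
qed

lemma Theta_diff: "t \<in> Theta p \<Longrightarrow> u \<in> Theta p \<Longrightarrow> (\<lambda>x. t x - u x) \<in> Theta p"
  unfolding Theta_def by auto

lemma circ_sym: "f \<in> Theta p \<Longrightarrow> 0 < p \<Longrightarrow> circ p f s r = circ p f r s"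
  unfolding circ_eq using Theta_symmetric_diff by metis

lemma circ_zero: "r < p*p \<Longrightarrow> circ p f 0 r = f (r div p, r mod p)"
  unfolding circ_eq using div_mod_less[of r p] by (simp add: md_of_nat)

lemma sum_circ_row: "0 < p \<Longrightarrow> r < p*p \<Longrightarrow> (\<Sum>s<p*p. g (circ p f r s)) = (\<Sum>x\<in>Lam p. g (f x))"
  unfolding circ_eq using sum_translate_Lam[of p "\<lambda>x. g (f x)"] by simp

lemma sum_circ_col: "0 < p \<Longrightarrow> s < p*p \<Longrightarrow> (\<Sum>r<p*p. g (circ p f r s)) = (\<Sum>x\<in>Lam p. g (f x))"
  unfolding circ_eq using sum_reflect_Lam[of p "\<lambda>x. g (f x)"] by simp

text \<open>Schur test: all absolute row and column sums of \<open>C(f)\<close> equal \<open>\<parallel>f\<parallel>\<^sub>1\<close>.\<close>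

lemma circ_quadratic_bound:
  assumes p: "0 < p"
  shows "\<bar>\<Sum>r<p*p. \<Sum>s<p*p. x r * circ p f r s * x s\<bar> \<le> norm1 p f * (\<Sum>r<p*p. (x r)^2)"
proof -
  let ?n = "p*p" and ?c = "circ p f"
  have row: "\<And>r. r < ?n \<Longrightarrow> (\<Sum>s<?n. \<bar>?c r s\<bar>) = norm1 p f"
    unfolding norm1_def using sum_circ_row[OF p, of _ abs f] by simp
  have col: "\<And>s. s < ?n \<Longrightarrow> (\<Sum>r<?n. \<bar>?c r s\<bar>) = norm1 p f"
    unfolding norm1_def using sum_circ_col[OF p, of _ abs f] by simp
  have "\<bar>\<Sum>r<?n. \<Sum>s<?n. x r * ?c r s * x s\<bar> \<le> (\<Sum>r<?n. \<Sum>s<?n. \<bar>x r * ?c r s * x s\<bar>)"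
    by (rule order_trans[OF sum_abs sum_mono[OF sum_abs]])
  also have "\<dots> \<le> (\<Sum>r<?n. \<Sum>s<?n. (x r)^2 / 2 * \<bar>?c r s\<bar> + (x s)^2 / 2 * \<bar>?c r s\<bar>)"
  proof (intro sum_mono)
    fix r s
    have "\<bar>x r\<bar> * \<bar>x s\<bar> \<le> ((x r)^2 + (x s)^2) / 2"
      using sum_squares_bound[of "\<bar>x r\<bar>" "\<bar>x s\<bar>"] by simp
    hence "\<bar>?c r s\<bar> * (\<bar>x r\<bar> * \<bar>x s\<bar>) \<le> \<bar>?c r s\<bar> * (((x r)^2 + (x s)^2) / 2)"
      by (rule mult_left_mono) simp
    thus "\<bar>x r * ?c r s * x s\<bar> \<le> (x r)^2 / 2 * \<bar>?c r s\<bar> + (x s)^2 / 2 * \<bar>?c r s\<bar>"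
      by (simp add: abs_mult algebra_simps add_divide_distrib)
  qed
  also have "\<dots> = (\<Sum>r<?n. \<Sum>s<?n. (x r)^2 / 2 * \<bar>?c r s\<bar>) + (\<Sum>r<?n. \<Sum>s<?n. (x s)^2 / 2 * \<bar>?c r s\<bar>)"
    by (simp add: sum.distrib)
  also have "(\<Sum>r<?n. \<Sum>s<?n. (x s)^2 / 2 * \<bar>?c r s\<bar>) = (\<Sum>s<?n. \<Sum>r<?n. (x s)^2 / 2 * \<bar>?c r s\<bar>)"
    by (rule sum.swap)
  also have "(\<Sum>r<?n. \<Sum>s<?n. (x r)^2 / 2 * \<bar>?c r s\<bar>) = (\<Sum>r<?n. (x r)^2 / 2 * norm1 p f)"
    by (intro sum.cong refl) (simp only: flip: sum_distrib_left, simp add: row)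
  also have "(\<Sum>s<?n. \<Sum>r<?n. (x s)^2 / 2 * \<bar>?c r s\<bar>) = (\<Sum>s<?n. (x s)^2 / 2 * norm1 p f)"
    by (intro sum.cong refl) (simp only: flip: sum_distrib_left, simp add: col)
  also have "(\<Sum>r<?n. (x r)^2 / 2 * norm1 p f) + (\<Sum>s<?n. (x s)^2 / 2 * norm1 p f) = norm1 p f * (\<Sum>r<?n. (x r)^2)"
    by (simp add: sum_distrib_left sum.distrib[symmetric] algebra_simps)
  finally show ?thesis .
qed

lemma IminusC_quadratic:
  assumes "v \<in> carrier_vec (p*p)"
  shows "v \<bullet> (IminusC p f *\<^sub>v v) = (\<Sum>r<p*p. (v $ r)^2) - (\<Sum>r<p*p. \<Sum>s<p*p. v $ r * circ p f r s * v $ s)"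
proof -
  have "v \<bullet> (IminusC p f *\<^sub>v v) = (\<Sum>r<p*p. \<Sum>s<p*p. v $ r * IminusC p f $$ (r,s) * v $ s)"
    by (rule scalar_prod_mult_mat_vec_sum[OF IminusC_carrier assms assms])
  also have "\<dots> = (\<Sum>r<p*p. \<Sum>s<p*p. (if r = s then v $ r * v $ s else 0) - v $ r * circ p f r s * v $ s)"
    by (intro sum.cong) (auto simp: IminusC_index algebra_simps)
  finally show ?thesis by (simp add: sum_subtractf power2_eq_square)
qed

lemma IminusC_pos_def:
  assumes p: "0 < p" and f: "norm1 p f < 1"
  shows "pos_def_mat (IminusC p f)"
  unfolding pos_def_mat_def
proof (intro conjI ballI impI)
  have d: "dim_row (IminusC p f) = p*p" using IminusC_carrier[of p f] by simp
  show "IminusC p f \<in> carrier_mat (dim_row (IminusC p f)) (dim_row (IminusC p f))"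
    using IminusC_carrier[of p f] by simp
  fix v :: "real vec" assume "v \<in> carrier_vec (dim_row (IminusC p f))" "v \<noteq> 0\<^sub>v (dim_row (IminusC p f))"
  hence v: "v \<in> carrier_vec (p*p)" "v \<noteq> 0\<^sub>v (p*p)" unfolding d .
  have "norm1 p f * (\<Sum>r<p*p. (v $ r)^2) < (\<Sum>r<p*p. (v $ r)^2)"
    using f sum_squares_pos_vec[OF v] by simp
  thus "v \<bullet> (IminusC p f *\<^sub>v v) > 0"
    using IminusC_quadratic[OF v(1), of f] circ_quadratic_bound[OF p, of "\<lambda>r. v $ r" f] by linarith
qed

lemma eigenvalue_IminusC_le:
  assumes p: "0 < p" and ev: "eigenvalue (IminusC p f) l"
  shows "l \<le> 1 + norm1 p f"
proof -
  obtain v where "eigenvector (IminusC p f) v l" using ev unfolding eigenvalue_def by blast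
  hence v: "v \<in> carrier_vec (p*p)" "v \<noteq> 0\<^sub>v (p*p)" "IminusC p f *\<^sub>v v = l \<cdot>\<^sub>v v"
    using IminusC_carrier[of p f] unfolding eigenvector_def by auto
  have "v \<bullet> (IminusC p f *\<^sub>v v) = l * (\<Sum>r<p*p. (v $ r)^2)"
    using v by (simp add: scalar_prod_def power2_eq_square lessThan_atLeast0 sum_distrib_left mult.left_commute)
  hence "l * (\<Sum>r<p*p. (v $ r)^2) \<le> (1 + norm1 p f) * (\<Sum>r<p*p. (v $ r)^2)"
    using IminusC_quadratic[OF v(1), of f] circ_quadratic_bound[OF p, of "\<lambda>r. v $ r" f]
    by (simp add: algebra_simps)
  thus ?thesis using sum_squares_pos_vec[OF v(1,2)] by simp
qed

lemma eigenvalue_IminusC_ones: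
  assumes p: "0 < p"
  shows "eigenvalue (IminusC p f) (1 - (\<Sum>x\<in>Lam p. f x))"
  unfolding eigenvalue_def eigenvector_def
proof (intro exI conjI)
  let ?v = "vec (p*p) (\<lambda>_. 1::real)"
  have d: "dim_row (IminusC p f) = p*p" using IminusC_carrier[of p f] by simp
  show "?v \<in> carrier_vec (dim_row (IminusC p f))" unfolding d by simp
  show "?v \<noteq> 0\<^sub>v (dim_row (IminusC p f))" unfolding d using p
    by (metis index_vec index_zero_vec(1) mult_pos_pos zero_neq_one)
  show "IminusC p f *\<^sub>v ?v = (1 - (\<Sum>x\<in>Lam p. f x)) \<cdot>\<^sub>v ?v"
  proof (rule eq_vecI)
    fix r assume "r < dim_vec ((1 - (\<Sum>x\<in>Lam p. f x)) \<cdot>\<^sub>v ?v)"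
    hence r: "r < p*p" by simp
    have "(IminusC p f *\<^sub>v ?v) $ r = (\<Sum>s<p*p. IminusC p f $$ (r,s))"
      using IminusC_carrier[of p f] r by (simp add: scalar_prod_def lessThan_atLeast0)
    also have "\<dots> = (\<Sum>s<p*p. (if r = s then 1 else 0) - circ p f r s)"
      by (rule sum.cong) (auto simp: IminusC_index r)
    also have "\<dots> = 1 - (\<Sum>x\<in>Lam p. f x)"
      using r sum_circ_row[OF p r, of "\<lambda>y. y" f] by (simp add: sum_subtractf)
    finally show "(IminusC p f *\<^sub>v ?v) $ r = ((1 - (\<Sum>x\<in>Lam p. f x)) \<cdot>\<^sub>v ?v) $ r" using r by simp
  qed (simp add: IminusC_carrier[of p f, THEN carrier_matD(1)])
qed

lemma phi_max_IminusC_less: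
  assumes p: "0 < p" and f: "norm1 p f < 1"
  shows "phi_max (IminusC p f) < 2"
proof -
  let ?E = "{k. eigenvalue (IminusC p f) k}"
  have A: "IminusC p f \<in> carrier_mat (p*p) (p*p)" by (rule IminusC_carrier)
  have "char_poly (IminusC p f) \<noteq> 0" using degree_monic_char_poly[OF A] by auto
  hence "finite ?E" using poly_roots_finite by (simp add: eigenvalue_root_char_poly[OF A])
  moreover have "?E \<noteq> {}" using eigenvalue_IminusC_ones[OF p] by blast
  moreover have "\<forall>k\<in>?E. k < 2" using eigenvalue_IminusC_le[OF p] f by fastforce
  ultimately show ?thesis unfolding phi_max_def using Max_less_iff by blast
qed

section \<open>Symmetries of the torus\<close>

definition translate :: "nat \<Rightarrow> nat \<Rightarrow> nat \<Rightarrow> nat \<times> nat \<Rightarrow> nat \<times> nat" where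
  "translate p a c x = (md p (int (fst x) + int a), md p (int (snd x) + int c))"

definition neg_if :: "nat \<Rightarrow> bool \<Rightarrow> nat \<Rightarrow> nat" where
  "neg_if p s a = (if s then md p (- int a) else a)"

definition dihedral :: "nat \<Rightarrow> bool \<Rightarrow> bool \<Rightarrow> bool \<Rightarrow> nat \<times> nat \<Rightarrow> nat \<times> nat" where
  "dihedral p sw sa sb x =
     (if sw then (neg_if p sa (snd x), neg_if p sb (fst x)) else (neg_if p sa (fst x), neg_if p sb (snd x)))"

lemma translate_Lam: "0 < p \<Longrightarrow> translate p a c x \<in> Lam p"
  unfolding translate_def Lam_def using md_less by auto

lemma inj_on_translate: assumes p: "0 < p" shows "inj_on (translate p a c) (Lam p)"
proof (rule inj_onI)
  fix x y assume x: "x \<in> Lam p" and y: "y \<in> Lam p" and e: "translate p a c x = translate p a c y"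
  have inj: "inj_on (\<lambda>i. md p (1 * int i + int a)) {0..<p}" "inj_on (\<lambda>i. md p (1 * int i + int c)) {0..<p}"
    using bij_betw_md_affine[OF p, of 1] bij_betw_imp_inj_on by auto
  have "fst x = fst y" using inj_onD[OF inj(1), of "fst x" "fst y"] e x y unfolding translate_def Lam_def by auto
  moreover have "snd x = snd y" using inj_onD[OF inj(2), of "snd x" "snd y"] e x y unfolding translate_def Lam_def by auto
  ultimately show "x = y" by (simp add: prod_eq_iff)
qed

lemma tdiff_Lam: "0 < p \<Longrightarrow> tdiff p x y \<in> Lam p"
  unfolding tdiff_def Lam_def using md_less by auto

lemma tdiff_translate: "0 < p \<Longrightarrow> tdiff p (translate p a c x) (translate p a c y) = tdiff p x y"
  unfolding tdiff_def translate_def by (simp add: md_diff_translate)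

lemma neg_if_less: "0 < p \<Longrightarrow> a < p \<Longrightarrow> neg_if p s a < p"
  unfolding neg_if_def using md_less by auto

lemma neg_if_neg_if: assumes p: "0 < p" and a: "a < p" shows "neg_if p s (neg_if p s a) = a"
  using a md_uminus_md[OF p, of "- int a"] unfolding neg_if_def by (simp add: md_of_nat)

lemma neg_if_zero: "neg_if p s 0 = 0"
  unfolding neg_if_def md_def by simp

lemma neg_if_diff: assumes p: "0 < p"
  shows "neg_if p s (md p (int y - int x)) = md p (int (neg_if p s y) - int (neg_if p s x))"
proof (cases s)
  case True
  have "(- int (md p (int y - int x))) mod int p = (int (md p (- int y)) - int (md p (- int x))) mod int p"
    unfolding of_nat_md[OF p] by (simp add: mod_minus_eq mod_diff_eq)
  thus ?thesis using True unfolding neg_if_def md_def by simp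
qed (simp add: neg_if_def)

lemma neg_if_min: assumes a: "a < p" shows "min (neg_if p s a) (p - neg_if p s a) = min a (p - a)"
proof (cases "s \<and> a \<noteq> 0")
  case True
  hence "(- int a) mod int p = int p - int a" using a zmod_zminus1_eq_if[of "int a" "int p"] by simp
  hence "md p (- int a) = p - a" unfolding md_def using a by simp
  thus ?thesis using True a unfolding neg_if_def by auto
qed (auto simp: neg_if_def md_def)

lemma dihedral_Lam: "0 < p \<Longrightarrow> x \<in> Lam p \<Longrightarrow> dihedral p sw sa sb x \<in> Lam p"
  unfolding dihedral_def Lam_def using neg_if_less by auto

lemma inj_on_dihedral: assumes p: "0 < p" shows "inj_on (dihedral p sw sa sb) (Lam p)"
proof (rule inj_onI)
  fix x y assume x: "x \<in> Lam p" and y: "y \<in> Lam p" and e: "dihedral p sw sa sb x = dihedral p sw sa sb y"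
  obtain x1 x2 y1 y2 where xy: "x = (x1,x2)" "y = (y1,y2)" by (cases x, cases y)
  have b: "x1 < p" "x2 < p" "y1 < p" "y2 < p" using x y xy unfolding Lam_def by auto
  have neg_if_inj: "neg_if p s a = neg_if p s a' \<Longrightarrow> a < p \<Longrightarrow> a' < p \<Longrightarrow> a = a'" for s a a'
    by (metis neg_if_neg_if[OF p])
  show "x = y"
    using e xy b neg_if_inj unfolding dihedral_def by (cases sw) auto
qed

lemma dihedral_zero: "dihedral p sw sa sb (0,0) = (0,0)"
  unfolding dihedral_def using neg_if_zero by simp

lemma tdiff_dihedral:
  "0 < p \<Longrightarrow> tdiff p (dihedral p sw sa sb x) (dihedral p sw sa sb y) = dihedral p sw sa sb (tdiff p x y)"
  unfolding dihedral_def tdiff_def by (auto simp: neg_if_diff)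

lemma dihedral_mball: assumes p: "0 < p" and x: "x \<in> Lam p"
  shows "dihedral p sw sa sb x \<in> mball p r \<longleftrightarrow> x \<in> mball p r"
proof -
  have "(0,0) \<in> Lam p" using p unfolding Lam_def by simp
  hence "dihedral p sw sa sb x = (0,0) \<longleftrightarrow> x = (0,0)"
    using inj_onD[OF inj_on_dihedral[OF p, of sw sa sb] _ x] dihedral_zero[of p sw sa sb] by auto
  moreover have "tnorm2 p (dihedral p sw sa sb x) = tnorm2 p x"
    using x unfolding dihedral_def Lam_def tnorm2_def by (auto simp: neg_if_min)
  ultimately show ?thesis unfolding mball_def using dihedral_Lam[OF p x] x by auto
qed

lemma G_iso_dihedral: "g \<in> G_iso p \<Longrightarrow> \<exists>sw sa sb. g = dihedral p sw sa sb"
  unfolding G_iso_def Let_def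
  by (elim insertE emptyE) (simp_all add: ex_bool_eq fun_eq_iff dihedral_def neg_if_def split_beta)

lemma Theta_m_closed: "closed (Theta_m p m)"
proof -
  have eq0: "closed {f :: 'a \<Rightarrow> real. f x = 0}" for x
    by (rule closed_Collect_eq, rule continuous_on_product_coordinates, rule continuous_on_const)
  have eq: "closed {f :: 'a \<Rightarrow> real. f x = f y}" for x y
    by (rule closed_Collect_eq; rule continuous_on_product_coordinates)
  have imp: "closed {f. C \<longrightarrow> Q f}" if "closed {f. Q f}" for C and Q :: "('a \<Rightarrow> real) \<Rightarrow> bool"
    using that by (cases C) auto
  have "Theta_m p m = {f. \<forall>x. (x \<notin> Lam p \<longrightarrow> f x = 0) \<and> (x = (0,0) \<longrightarrow> f x = 0)
      \<and> (x \<in> Lam p \<longrightarrow> f x = f (md p (- int (fst x)), md p (- int (snd x)))) \<and> (x \<notin> m \<longrightarrow> f x = 0)}"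
    unfolding Theta_m_def Theta_def by auto
  also have "closed \<dots>"
    by (intro closed_Collect_all closed_Collect_conj imp eq0 eq)
  finally show ?thesis .
qed

definition index_map :: "nat \<Rightarrow> (nat \<times> nat \<Rightarrow> nat \<times> nat) \<Rightarrow> nat \<Rightarrow> nat" where
  "index_map p g r = fst (g (r div p, r mod p)) * p + snd (g (r div p, r mod p))"

lemma index_map_div_mod:
  assumes "\<And>x. x \<in> Lam p \<Longrightarrow> g x \<in> Lam p" and "r < p*p"
  shows "(index_map p g r div p, index_map p g r mod p) = g (r div p, r mod p)"
  unfolding index_map_def using assms div_mod_in_Lam vec_index_div_mod by (metis prod.collapse)

lemma bij_betw_index_map:
  assumes G: "\<And>x. x \<in> Lam p \<Longrightarrow> g x \<in> Lam p" and inj: "inj_on g (Lam p)"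
  shows "bij_betw (index_map p g) {..<p*p} {..<p*p}"
proof -
  have "index_map p g r < p*p" if "r < p*p" for r
    using vec_index_less[of "fst (g (r div p, r mod p))" "snd (g (r div p, r mod p))" p]
      G[OF div_mod_in_Lam[OF that]] unfolding index_map_def by simp
  hence sub: "index_map p g ` {..<p*p} \<subseteq> {..<p*p}" by auto
  have "inj_on (index_map p g) {..<p*p}"
  proof (rule inj_onI)
    fix r s assume "r \<in> {..<p*p}" "s \<in> {..<p*p}" and e: "index_map p g r = index_map p g s"
    hence r: "r < p*p" and s: "s < p*p" by auto
    have "g (r div p, r mod p) = (index_map p g r div p, index_map p g r mod p)"
      by (rule index_map_div_mod[OF G r, symmetric])
    also have "\<dots> = g (s div p, s mod p)" unfolding e by (rule index_map_div_mod[OF G s])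
    finally have "g (r div p, r mod p) = g (s div p, s mod p)" .
    hence "(r div p, r mod p) = (s div p, s mod p)"
      by (rule inj_onD[OF inj _ div_mod_in_Lam[OF r] div_mod_in_Lam[OF s]])
    thus "r = s" by (metis div_mult_mod_eq prod.inject)
  qed
  thus ?thesis unfolding bij_betw_def using endo_inj_surj[OF finite_lessThan sub] by simp
qed

lemma circ_index_map:
  assumes G: "\<And>x. x \<in> Lam p \<Longrightarrow> g x \<in> Lam p"
    and f_g: "\<And>x y. x \<in> Lam p \<Longrightarrow> y \<in> Lam p \<Longrightarrow> f (tdiff p (g x) (g y)) = f (tdiff p x y)"
    and r: "r < p*p" and s: "s < p*p"
  shows "circ p f (index_map p g r) (index_map p g s) = circ p f r s"
proof -
  have "circ p f (index_map p g r) (index_map p g s) = f (tdiff p (g (r div p, r mod p)) (g (s div p, s mod p)))"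
    unfolding circ_def by (simp only: index_map_div_mod[OF G r] index_map_div_mod[OF G s])
  also have "\<dots> = circ p f r s"
    unfolding circ_def by (rule f_g[OF div_mod_in_Lam[OF r] div_mod_in_Lam[OF s]])
  finally show ?thesis .
qed

section \<open>Regression of the centre on a ball\<close>

text \<open>The coefficient vector of \<open>X[0,0] - \<Sum> t[i,j] X[i,j]\<close>, in vectorized indexing.\<close>

definition contrast_vec :: "nat \<Rightarrow> (nat \<times> nat \<Rightarrow> real) \<Rightarrow> nat \<Rightarrow> real" where
  "contrast_vec p t r = (if r = 0 then 1 else - t (r div p, r mod p))"

locale torus_regression =
  fixes p :: nat and s2 :: real and \<theta> :: "nat \<times> nat \<Rightarrow> real" and m :: "(nat \<times> nat) set"
  assumes p_ge: "p \<ge> 2" and s2_pos: "s2 > 0" and theta_ThetaPlus: "\<theta> \<in> ThetaPlus p"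
    and norm1_theta: "norm1 p \<theta> < 1" and m_M1: "m \<in> M1 p"
begin

abbreviation "n \<equiv> p * p"
abbreviation "Q \<equiv> IminusC p \<theta>"
abbreviation "K \<equiv> minv Q"
abbreviation "S \<equiv> CovS p s2 \<theta>"

lemma p_pos: "0 < p" using p_ge by simp

lemma theta_Theta: "\<theta> \<in> Theta p" using theta_ThetaPlus unfolding ThetaPlus_def by simp

lemma Q_carrier: "Q \<in> carrier_mat n n" by (rule IminusC_carrier)

lemma Q_pos_def: "\<forall>v\<in>carrier_vec n. v \<noteq> 0\<^sub>v n \<longrightarrow> v \<bullet> (Q *\<^sub>v v) > 0"
  using theta_ThetaPlus Q_carrier unfolding ThetaPlus_def pos_def_mat_def by auto

lemma K_inverse: "K \<in> carrier_mat n n \<and> Q * K = 1\<^sub>m n \<and> K * Q = 1\<^sub>m n"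
  by (rule minv_pos_def[OF Q_carrier Q_pos_def])

lemma K_carrier: "K \<in> carrier_mat n n" using K_inverse by simp

lemma Q_index: "i < n \<Longrightarrow> j < n \<Longrightarrow> Q $$ (i,j) = (if i = j then 1 else 0) - circ p \<theta> i j"
  by (rule IminusC_index)

lemma S_carrier: "S \<in> carrier_mat n n" using K_carrier unfolding CovS_def by simp

lemma S_index: "i < n \<Longrightarrow> j < n \<Longrightarrow> S $$ (i,j) = s2 * K $$ (i,j)"
  using K_carrier unfolding CovS_def by simp

lemma S_sym: "i < n \<Longrightarrow> j < n \<Longrightarrow> S $$ (j,i) = S $$ (i,j)"
  using inverse_mat_symmetric[OF Q_carrier K_carrier _ _ , of j i] K_inverse
    circ_sym[OF theta_Theta p_pos] by (simp add: Q_index S_index)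

lemma S_index_map:
  assumes G: "\<And>x. x \<in> Lam p \<Longrightarrow> g x \<in> Lam p" and inj: "inj_on g (Lam p)"
    and \<theta>_g: "\<And>x y. x \<in> Lam p \<Longrightarrow> y \<in> Lam p \<Longrightarrow> \<theta> (tdiff p (g x) (g y)) = \<theta> (tdiff p x y)"
    and rs: "r < n" "s < n"
  shows "S $$ (index_map p g r, index_map p g s) = S $$ (r,s)"
proof -
  have \<pi>: "bij_betw (index_map p g) {..<n} {..<n}" by (rule bij_betw_index_map[OF G inj])
  hence less: "\<And>r. r < n \<Longrightarrow> index_map p g r < n" and eq: "\<And>r s. r < n \<Longrightarrow> s < n \<Longrightarrow> index_map p g r = index_map p g s \<longleftrightarrow> r = s"
    unfolding bij_betw_def inj_on_def by auto
  have "Q $$ (index_map p g r, index_map p g s) = Q $$ (r,s)" if "r < n" "s < n" for r s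
    using that less eq circ_index_map[OF G \<theta>_g] by (simp add: Q_index)
  hence "K $$ (index_map p g r, index_map p g s) = K $$ (r,s)"
    using inverse_mat_permute[OF Q_carrier K_carrier _ _ \<pi> _ rs] K_inverse by blast
  thus ?thesis using rs less by (simp add: S_index)
qed

lemma K_pos_def: assumes v: "v \<in> carrier_vec n" "v \<noteq> 0\<^sub>v n" shows "v \<bullet> (K *\<^sub>v v) > 0"
proof -
  define w where "w = K *\<^sub>v v"
  have w: "w \<in> carrier_vec n" unfolding w_def using K_carrier v by simp
  have Qw: "Q *\<^sub>v w = v" unfolding w_def
    using assoc_mult_mat_vec[OF Q_carrier K_carrier v(1), symmetric] K_inverse v(1) by simp
  have "w \<noteq> 0\<^sub>v n"
  proof
    assume "w = 0\<^sub>v n"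
    hence "Q *\<^sub>v w = 0\<^sub>v n" using Q_carrier by (intro eq_vecI) auto
    thus False using Qw v by simp
  qed
  hence "w \<bullet> v > 0" using Q_pos_def w Qw by metis
  thus ?thesis unfolding w_def using comm_scalar_prod[OF v(1) w] w_def by simp
qed

lemma qform_S_pos: assumes "r < n" "x r \<noteq> 0" shows "qform n S x x > 0"
proof -
  have "vec n x \<noteq> 0\<^sub>v n" using assms by (metis index_vec index_zero_vec(1))
  hence "vec n x \<bullet> (K *\<^sub>v vec n x) > 0" using K_pos_def by simp
  moreover have "qform n S x x = s2 * qform n K x x"
    unfolding qform_def by (simp add: S_index sum_distrib_left mult.assoc mult.left_commute)
  ultimately show ?thesis using s2_pos by (simp add: qform_eq_scalar_prod[OF K_carrier])
qed

lemma qform_S_nonneg: "qform n S x x \<ge> 0"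
  using qform_S_pos[of _ x] unfolding qform_def by (cases "\<exists>r<n. x r \<noteq> 0") (auto intro: less_imp_le)

lemma qform_S_commute: "qform n S x y = qform n S y x"
  by (rule qform_commute, rule S_sym)

lemma gamma_eq_qform: "gamma p s2 \<theta> t = qform n S (contrast_vec p t) (contrast_vec p t)"
proof -
  have "vecz p (\<lambda>x. if x = (0,0) then 1 else - t x) = vec n (contrast_vec p t)"
    unfolding vecz_def contrast_vec_def using div_mod_eq_zero_iff[OF p_pos] by (intro eq_vecI) auto
  thus ?thesis unfolding gamma_def Let_def using qform_eq_scalar_prod[OF S_carrier] by simp
qed

lemma m_subset: "m \<subseteq> Lam p - {(0,0)}"
  using m_M1 unfolding M1_def mball_def by auto

abbreviation "M \<equiv> (\<lambda>(i,j). i*p+j) ` m"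

lemma M_less: "r \<in> M \<Longrightarrow> r < n"
  using m_subset vec_index_less by auto

lemma mem_M_iff: "r < n \<Longrightarrow> r \<in> M \<longleftrightarrow> (r div p, r mod p) \<in> m"
proof
  assume "r \<in> M"
  then obtain i j where ij: "(i,j) \<in> m" "r = i*p+j" by auto
  hence "(i,j) \<in> Lam p" using m_subset by auto
  thus "(r div p, r mod p) \<in> m" using ij vec_index_div_mod by simp
next
  assume "(r div p, r mod p) \<in> m"
  moreover have "r = (r div p) * p + r mod p" by simp
  ultimately show "r \<in> M" by (metis (no_types, lifting) case_prod_conv image_eqI)
qed

lemma zero_notin_M: "0 \<notin> M"
  using mem_M_iff[of 0] m_subset p_pos by auto

lemma finite_M: "finite M"
  using M_less by (meson finite_lessThan finite_subset lessThan_iff subsetI)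

abbreviation "k \<equiv> card M"

text \<open>Submatrices of \<open>S\<close> are indexed through \<open>pick\<close>; \<open>lift\<close> is the inverse passage from
  coordinates on \<open>M\<close> back to vectors of length \<open>n\<close>.\<close>

lemma inj_on_pick: "inj_on (pick M) {..<k}"
  using pick_mono_le by (intro inj_onI) (metis lessThan_iff linorder_neqE_nat less_irrefl)

lemma pick_image: "pick M ` {..<k} = M"
proof -
  have "pick M ` {..<k} \<subseteq> M" using pick_in_set_le by auto
  moreover have "card (pick M ` {..<k}) = k" using card_image[OF inj_on_pick] by simp
  ultimately show ?thesis using finite_M by (simp add: card_subset_eq)
qed

lemma pick_less: "a < k \<Longrightarrow> pick M a < n" using pick_in_set_le M_less by blast

definition lift :: "(nat \<Rightarrow> real) \<Rightarrow> nat \<Rightarrow> real" where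
  "lift x r = (\<Sum>a<k. if pick M a = r then x a else 0)"

lemma sum_lift_mult: "(\<Sum>r<n. lift x r * f r) = (\<Sum>a<k. x a * f (pick M a))"
proof -
  have "(\<Sum>r<n. lift x r * f r) = (\<Sum>r<n. \<Sum>a<k. if pick M a = r then x a * f r else 0)"
    unfolding lift_def sum_distrib_right by (rule sum.cong) (auto intro: sum.cong)
  also have "\<dots> = (\<Sum>a<k. \<Sum>r<n. if pick M a = r then x a * f r else 0)" by (rule sum.swap)
  also have "\<dots> = (\<Sum>a<k. x a * f (pick M a))" by (rule sum.cong[OF refl]) (simp add: pick_less)
  finally show ?thesis .
qed

lemma lift_pick: "a < k \<Longrightarrow> lift x (pick M a) = x a"
proof -
  assume a: "a < k"
  have "lift x (pick M a) = (\<Sum>a'<k. if a' = a then x a' else 0)"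
    unfolding lift_def using inj_on_pick a by (intro sum.cong refl) (auto dest: inj_onD)
  thus ?thesis using a by simp
qed

lemma lift_outside: "r \<notin> M \<Longrightarrow> lift x r = 0"
  unfolding lift_def using pick_in_set_le by (auto intro!: sum.neutral)

abbreviation "T \<equiv> submatrix S M M"
abbreviation "U \<equiv> submatrix S M {0}"
abbreviation "W \<equiv> minv T * U"

lemma card_rows_cols:
  "card {i. i < dim_row S \<and> i \<in> M} = k" "card {i. i < dim_col S \<and> i \<in> M} = k"
  "card {i. i < dim_row S \<and> i \<in> {0::nat}} = 1" "card {i. i < dim_col S \<and> i \<in> {0::nat}} = 1"
proof -
  have "{i. i < dim_row S \<and> i \<in> M} = M" "{i. i < dim_col S \<and> i \<in> M} = M"
    "{i. i < dim_row S \<and> i \<in> {0::nat}} = {0}" "{i. i < dim_col S \<and> i \<in> {0::nat}} = {0}"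
    using S_carrier M_less p_pos by auto
  thus "card {i. i < dim_row S \<and> i \<in> M} = k" "card {i. i < dim_col S \<and> i \<in> M} = k"
    "card {i. i < dim_row S \<and> i \<in> {0::nat}} = 1" "card {i. i < dim_col S \<and> i \<in> {0::nat}} = 1"
    by auto
qed

lemma T_carrier: "T \<in> carrier_mat k k"
  using card_rows_cols unfolding submatrix_def by simp

lemma T_index: "a < k \<Longrightarrow> c < k \<Longrightarrow> T $$ (a,c) = S $$ (pick M a, pick M c)"
  using submatrix_index[of a S M c M] card_rows_cols by simp

lemma U_carrier: "U \<in> carrier_mat k 1"
  using card_rows_cols unfolding submatrix_def by simp

lemma U_index: "a < k \<Longrightarrow> U $$ (a,0) = S $$ (pick M a, 0)"
  using submatrix_index[of a S M 0 "{0}"] card_rows_cols by simp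

lemma qform_S_lift:
  "qform n S (lift x) (lift y) = (\<Sum>a<k. \<Sum>c<k. x a * S $$ (pick M a, pick M c) * y c)"
proof -
  have "qform n S (lift x) (lift y) = (\<Sum>r<n. lift x r * (\<Sum>s<n. lift y s * S $$ (r,s)))"
    unfolding qform_def by (simp add: sum_distrib_left mult.commute mult.left_commute)
  also have "\<dots> = (\<Sum>a<k. x a * (\<Sum>c<k. y c * S $$ (pick M a, pick M c)))"
    by (simp add: sum_lift_mult)
  finally show ?thesis by (simp add: sum_distrib_left mult.commute mult.left_commute)
qed

lemma T_pos_def: "\<forall>v\<in>carrier_vec k. v \<noteq> 0\<^sub>v k \<longrightarrow> v \<bullet> (T *\<^sub>v v) > 0"
proof (intro ballI impI)
  fix v :: "real vec" assume v: "v \<in> carrier_vec k" "v \<noteq> 0\<^sub>v k"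
  then obtain a where a: "a < k" "v $ a \<noteq> 0" by (metis eq_vecI carrier_vecD index_zero_vec)
  have "v \<bullet> (T *\<^sub>v v) = qform n S (lift (\<lambda>a. v $ a)) (lift (\<lambda>a. v $ a))"
    by (simp add: scalar_prod_mult_mat_vec_sum[OF T_carrier v(1) v(1)] qform_S_lift T_index)
  also have "\<dots> > 0"
    by (rule qform_S_pos[of "pick M a"]) (use a in \<open>auto simp: pick_less lift_pick\<close>)
  finally show "v \<bullet> (T *\<^sub>v v) > 0" .
qed

lemma minv_T: "minv T \<in> carrier_mat k k \<and> T * minv T = 1\<^sub>m k \<and> minv T * T = 1\<^sub>m k"
  by (rule minv_pos_def[OF T_carrier T_pos_def])

lemma W_carrier: "W \<in> carrier_mat k 1" using minv_T U_carrier by auto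

lemma T_mult_W: "T * W = U"
  using assoc_mult_mat[OF T_carrier _ U_carrier, of "minv T"] minv_T U_carrier by simp

text \<open>The regression coefficients: \<open>bvec\<close> is \<open>\<Sigma>\<^sub>M\<^sub>M\<^sup>-\<^sup>1 \<Sigma>\<^sub>M\<^sub>0\<close> padded by zeros, and
  \<open>beta\<close> is the same vector read as an array on the torus.\<close>

definition bvec :: "nat \<Rightarrow> real" where "bvec = lift (\<lambda>a. W $$ (a,0))"

definition beta :: "nat \<times> nat \<Rightarrow> real" where
  "beta x = (if x \<in> m then bvec (fst x * p + snd x) else 0)"

lemma bvec_outside: "r \<notin> M \<Longrightarrow> bvec r = 0" unfolding bvec_def by (rule lift_outside)

lemma bvec_zero: "bvec 0 = 0" using bvec_outside zero_notin_M by simp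

lemma normal_equations: "r \<in> M \<Longrightarrow> (\<Sum>s<n. S $$ (r,s) * bvec s) = S $$ (r,0)"
proof -
  assume "r \<in> M"
  hence "r \<in> pick M ` {..<k}" unfolding pick_image .
  then obtain a where a: "a < k" "r = pick M a" by blast
  have "(\<Sum>s<n. S $$ (r,s) * bvec s) = (\<Sum>s<n. bvec s * S $$ (r,s))" by (simp add: mult.commute)
  also have "\<dots> = (\<Sum>c<k. W $$ (c,0) * S $$ (r, pick M c))" unfolding bvec_def by (rule sum_lift_mult)
  also have "\<dots> = (\<Sum>c<k. T $$ (a,c) * W $$ (c,0))" using a by (intro sum.cong) (auto simp: T_index)
  also have "\<dots> = (T * W) $$ (a,0)" using index_mult_mat_sum[OF T_carrier W_carrier a(1)] by simp
  also have "\<dots> = S $$ (r,0)" using T_mult_W U_index a by simp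
  finally show ?thesis .
qed

lemma beta_div_mod: "r < n \<Longrightarrow> beta (r div p, r mod p) = bvec r"
  unfolding beta_def using mem_M_iff bvec_outside by auto

lemma beta_outside: "x \<notin> m \<Longrightarrow> beta x = 0" unfolding beta_def by simp

lemma contrast_vec_beta: "r < n \<Longrightarrow> contrast_vec p beta r = (if r = 0 then 1 else 0) - bvec r"
  unfolding contrast_vec_def using beta_div_mod bvec_zero by auto

lemma residual_orthogonal: "r \<in> M \<Longrightarrow> (\<Sum>s<n. S $$ (r,s) * contrast_vec p beta s) = 0"
proof -
  assume r: "r \<in> M"
  have "(\<Sum>s<n. S $$ (r,s) * contrast_vec p beta s) = (\<Sum>s<n. (if s = 0 then S $$ (r,s) else 0) - S $$ (r,s) * bvec s)"
    by (rule sum.cong) (auto simp: contrast_vec_beta algebra_simps)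
  also have "\<dots> = S $$ (r,0) - S $$ (r,0)"
    using p_pos normal_equations[OF r] by (simp add: sum_subtractf)
  finally show ?thesis by simp
qed

definition deviation :: "(nat \<times> nat \<Rightarrow> real) \<Rightarrow> nat \<Rightarrow> real" where
  "deviation t r = t (r div p, r mod p) - bvec r"

lemma gamma_pythagoras:
  assumes t: "\<forall>x. x \<notin> m \<longrightarrow> t x = 0"
  shows "gamma p s2 \<theta> t = gamma p s2 \<theta> beta + qform n S (deviation t) (deviation t)"
proof -
  have "t (0,0) = 0" using t m_subset by auto
  hence a_t: "\<And>r. r < n \<Longrightarrow> contrast_vec p t r = contrast_vec p beta r - deviation t r"
    unfolding contrast_vec_def deviation_def using beta_div_mod bvec_zero by auto
  have "\<And>r. r < n \<Longrightarrow> r \<notin> M \<Longrightarrow> deviation t r = 0"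
    unfolding deviation_def using mem_M_iff t bvec_outside by auto
  hence cross: "qform n S (deviation t) (contrast_vec p beta) = 0"
    unfolding qform_row using residual_orthogonal by (intro sum.neutral) auto
  have "gamma p s2 \<theta> t = qform n S (\<lambda>r. contrast_vec p beta r - deviation t r) (\<lambda>r. contrast_vec p beta r - deviation t r)"
    unfolding gamma_eq_qform by (rule qform_cong; simp add: a_t)
  also have "\<dots> = gamma p s2 \<theta> beta + qform n S (deviation t) (deviation t)"
    unfolding qform_diff gamma_eq_qform using cross qform_S_commute[of "deviation t" "contrast_vec p beta"] by simp
  finally show ?thesis .
qed

lemma gamma_beta_le: "\<forall>x. x \<notin> m \<longrightarrow> t x = 0 \<Longrightarrow> gamma p s2 \<theta> beta \<le> gamma p s2 \<theta> t"
  using gamma_pythagoras qform_S_nonneg by (metis le_add_same_cancel1)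

lemma gamma_le_beta_imp_eq:
  assumes t: "\<forall>x. x \<notin> m \<longrightarrow> t x = 0" and le: "gamma p s2 \<theta> t \<le> gamma p s2 \<theta> beta"
  shows "t = beta"
proof
  fix x
  have "qform n S (deviation t) (deviation t) \<le> 0" using gamma_pythagoras[OF t] le by simp
  hence dev: "deviation t r = 0" if "r < n" for r
    using qform_S_pos[OF that, of "deviation t"] by fastforce
  show "t x = beta x"
  proof (cases "x \<in> Lam p")
    case True
    then obtain i j where x: "x = (i,j)" and r: "i*p+j < n"
      using vec_index_less by (cases x) auto
    thus ?thesis using dev[OF r] beta_div_mod[OF r] vec_index_div_mod True
      unfolding deviation_def by simp
  next
    case False
    hence "x \<notin> m" using m_subset by auto
    thus ?thesis using t beta_outside by metis
  qed
qed

text \<open>\<open>s2 * res_cov r\<close> is the covariance of \<open>X\<^sub>r\<close> with the regression residual, so it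
  vanishes on \<open>M\<close>; and \<open>Q * res_cov\<close> is the contrast vector of \<open>beta\<close>.\<close>

definition res_cov :: "nat \<Rightarrow> real" where
  "res_cov r = (\<Sum>s<n. K $$ (r,s) * contrast_vec p beta s)"

lemma res_cov_M: "r \<in> M \<Longrightarrow> res_cov r = 0"
proof -
  assume r: "r \<in> M"
  have "s2 * res_cov r = (\<Sum>s<n. S $$ (r,s) * contrast_vec p beta s)"
    unfolding res_cov_def using M_less[OF r] by (simp add: S_index sum_distrib_left mult.assoc)
  thus ?thesis using residual_orthogonal[OF r] s2_pos by simp
qed

lemma contrast_vec_beta_res_cov:
  assumes r: "r < n"
  shows "contrast_vec p beta r = res_cov r - (\<Sum>s<n. circ p \<theta> r s * res_cov s)"
proof -
  have "(\<Sum>s<n. Q $$ (r,s) * res_cov s) = (\<Sum>t<n. (\<Sum>s<n. Q $$ (r,s) * K $$ (s,t)) * contrast_vec p beta t)"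
    unfolding res_cov_def sum_distrib_left sum_distrib_right mult.assoc by (rule sum.swap)
  also have "\<dots> = (\<Sum>t<n. (Q * K) $$ (r,t) * contrast_vec p beta t)"
    using index_mult_mat_sum[OF Q_carrier K_carrier r] by simp
  also have "\<dots> = (\<Sum>t<n. (if r = t then contrast_vec p beta t else 0))"
    using K_inverse r by (intro sum.cong) auto
  finally have "contrast_vec p beta r = (\<Sum>s<n. Q $$ (r,s) * res_cov s)" using r by simp
  also have "\<dots> = (\<Sum>s<n. (if r = s then res_cov s else 0) - circ p \<theta> r s * res_cov s)"
    by (rule sum.cong) (auto simp: Q_index r algebra_simps)
  finally show ?thesis using r by (simp add: sum_subtractf)
qed

lemma abs_bvec_add_abs_res_cov_le:
  assumes r: "r < n" "r \<noteq> 0"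
  shows "\<bar>bvec r\<bar> + \<bar>res_cov r\<bar> \<le> (\<Sum>s<n. \<bar>circ p \<theta> r s\<bar> * \<bar>res_cov s\<bar>)"
proof -
  have eq: "- bvec r = res_cov r - (\<Sum>s<n. circ p \<theta> r s * res_cov s)"
    using contrast_vec_beta_res_cov[OF r(1)] contrast_vec_beta[OF r(1)] r(2) by simp
  have "\<bar>\<Sum>s<n. circ p \<theta> r s * res_cov s\<bar> \<le> (\<Sum>s<n. \<bar>circ p \<theta> r s\<bar> * \<bar>res_cov s\<bar>)"
    by (rule order_trans[OF sum_abs]) (simp add: abs_mult)
  moreover have "bvec r = 0 \<or> res_cov r = 0" using res_cov_M bvec_outside by blast
  ultimately show ?thesis using eq by auto
qed

text \<open>Summing the previous bound over \<open>r \<noteq> 0\<close> and exchanging the sums turns every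
  column of \<open>C(\<theta>)\<close> into \<open>\<parallel>\<theta>\<parallel>\<^sub>1\<close> minus its entry in row \<open>0\<close>.\<close>

lemma sum_abs_bvec_le:
  "(\<Sum>r\<in>{..<n}-{0}. \<bar>bvec r\<bar>)
     \<le> norm1 p \<theta> * \<bar>res_cov 0\<bar> - (\<Sum>s<n. \<bar>circ p \<theta> 0 s\<bar> * \<bar>res_cov s\<bar>)"
proof -
  let ?A = "{..<n}-{0}" and ?R = "norm1 p \<theta>"
  have n: "0 < n" using p_pos by simp
  have col: "(\<Sum>r\<in>?A. \<bar>circ p \<theta> r s\<bar>) = ?R - \<bar>circ p \<theta> 0 s\<bar>" if "s < n" for s
    using sum_circ_col[OF p_pos that, of abs \<theta>] n unfolding norm1_def by (simp add: sum.remove[of _ 0])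
  have "(\<Sum>r\<in>?A. \<bar>bvec r\<bar>) + (\<Sum>r\<in>?A. \<bar>res_cov r\<bar>) \<le> (\<Sum>r\<in>?A. \<Sum>s<n. \<bar>circ p \<theta> r s\<bar> * \<bar>res_cov s\<bar>)"
    unfolding sum.distrib[symmetric] by (rule sum_mono) (use abs_bvec_add_abs_res_cov_le in auto)
  also have "\<dots> = (\<Sum>s<n. (\<Sum>r\<in>?A. \<bar>circ p \<theta> r s\<bar>) * \<bar>res_cov s\<bar>)"
    by (subst sum.swap) (simp add: sum_distrib_right)
  also have "\<dots> = ?R * (\<Sum>s<n. \<bar>res_cov s\<bar>) - (\<Sum>s<n. \<bar>circ p \<theta> 0 s\<bar> * \<bar>res_cov s\<bar>)"
    by (simp add: col left_diff_distrib sum_subtractf sum_distrib_left)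
  also have "(\<Sum>s<n. \<bar>res_cov s\<bar>) = \<bar>res_cov 0\<bar> + (\<Sum>r\<in>?A. \<bar>res_cov r\<bar>)"
    using n by (simp add: sum.remove[of _ 0])
  finally show ?thesis
    using norm1_theta mult_left_le_one_le[of "\<Sum>r\<in>?A. \<bar>res_cov r\<bar>" ?R]
    by (simp add: distrib_left sum_nonneg norm1_def)
qed

lemma norm1_beta_le: "norm1 p beta \<le> norm1 p \<theta>"
proof -
  let ?R = "norm1 p \<theta>" and ?P = "\<Sum>s<n. \<bar>circ p \<theta> 0 s\<bar> * \<bar>res_cov s\<bar>"
  have n: "0 < n" using p_pos by simp
  have R: "0 \<le> ?R" "?R < 1" using norm1_theta unfolding norm1_def by (auto simp: sum_nonneg)
  have "1 = res_cov 0 - (\<Sum>s<n. circ p \<theta> 0 s * res_cov s)"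
    using contrast_vec_beta_res_cov[OF n] contrast_vec_beta[OF n] bvec_zero by simp
  moreover have "\<bar>\<Sum>s<n. circ p \<theta> 0 s * res_cov s\<bar> \<le> ?P"
    by (rule order_trans[OF sum_abs]) (simp add: abs_mult)
  ultimately have res0: "res_cov 0 \<le> 1 + ?P" "1 - ?P \<le> res_cov 0" by linarith+
  have "?R * \<bar>res_cov 0\<bar> - ?P \<le> ?R"
  proof (cases "res_cov 0 \<ge> 0")
    case True
    hence "?R * \<bar>res_cov 0\<bar> \<le> ?R * (1 + ?P)" using res0 R by (simp add: mult_left_mono)
    moreover have "?R * ?P \<le> ?P" using R by (simp add: mult_left_le_one_le sum_nonneg)
    ultimately show ?thesis by (simp add: algebra_simps)
  next
    case False
    moreover have "?R * \<bar>res_cov 0\<bar> \<le> \<bar>res_cov 0\<bar>" using R by (simp add: mult_left_le_one_le)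
    ultimately show ?thesis using res0 R by linarith
  qed
  moreover have "norm1 p beta = (\<Sum>s<n. \<bar>bvec s\<bar>)"
    unfolding norm1_def sum_div_mod_Lam[of "\<lambda>x. \<bar>beta x\<bar>" p, symmetric] by (rule sum.cong) (auto simp: beta_div_mod)
  ultimately show ?thesis
    using sum_abs_bvec_le n bvec_zero by (simp add: sum.remove[of _ 0])
qed

text \<open>A symmetry of the torus that fixes the origin and preserves \<open>C(\<theta>)\<close> acts as a
  permutation of the coordinates preserving \<open>\<Sigma>\<close>, hence it does not change \<open>\<gamma>\<close>.\<close>

lemma gamma_comp_automorphism:
  assumes G: "\<And>x. x \<in> Lam p \<Longrightarrow> g x \<in> Lam p" and inj: "inj_on g (Lam p)" and g0: "g (0,0) = (0,0)"
    and \<theta>_g: "\<And>x y. x \<in> Lam p \<Longrightarrow> y \<in> Lam p \<Longrightarrow> \<theta> (tdiff p (g x) (g y)) = \<theta> (tdiff p x y)"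
  shows "gamma p s2 \<theta> (\<lambda>x. if x \<in> Lam p then t (g x) else 0) = gamma p s2 \<theta> t"
proof -
  let ?\<pi> = "index_map p g" and ?a = "contrast_vec p t"
  have \<pi>: "bij_betw ?\<pi> {..<n} {..<n}" by (rule bij_betw_index_map[OF G inj])
  have \<pi>0: "?\<pi> 0 = 0" unfolding index_map_def using g0 by simp
  have a: "contrast_vec p (\<lambda>x. if x \<in> Lam p then t (g x) else 0) r = ?a (?\<pi> r)" if r: "r < n" for r
  proof (cases "r = 0")
    case False
    hence "?\<pi> r \<noteq> 0" using \<pi> r \<pi>0 p_pos unfolding bij_betw_def inj_on_def by (metis lessThan_iff mult_pos_pos)
    thus ?thesis unfolding contrast_vec_def using False index_map_div_mod[OF G r] div_mod_in_Lam[OF r] by simp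
  qed (simp add: contrast_vec_def \<pi>0)
  have "gamma p s2 \<theta> (\<lambda>x. if x \<in> Lam p then t (g x) else 0)
      = (\<Sum>r<n. \<Sum>s<n. ?a (?\<pi> r) * S $$ (?\<pi> r, ?\<pi> s) * ?a (?\<pi> s))"
    unfolding gamma_eq_qform qform_def by (intro sum.cong) (auto simp: a S_index_map[OF G inj \<theta>_g])
  also have "\<dots> = (\<Sum>r<n. \<Sum>s<n. ?a (?\<pi> r) * S $$ (?\<pi> r, s) * ?a s)"
    by (rule sum.cong[OF refl], rule sum.reindex_bij_betw[OF \<pi>, of "\<lambda>s. ?a (?\<pi> _) * S $$ (?\<pi> _, s) * ?a s"])
  also have "\<dots> = (\<Sum>r<n. \<Sum>s<n. ?a r * S $$ (r, s) * ?a s)"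
    by (rule sum.reindex_bij_betw[OF \<pi>, of "\<lambda>r. \<Sum>s<n. ?a r * S $$ (r, s) * ?a s"])
  finally show ?thesis unfolding gamma_eq_qform qform_def .
qed

lemma beta_comp_automorphism:
  assumes G: "\<And>x. x \<in> Lam p \<Longrightarrow> g x \<in> Lam p" and inj: "inj_on g (Lam p)" and g0: "g (0,0) = (0,0)"
    and \<theta>_g: "\<And>x y. x \<in> Lam p \<Longrightarrow> y \<in> Lam p \<Longrightarrow> \<theta> (tdiff p (g x) (g y)) = \<theta> (tdiff p x y)"
    and m_g: "\<And>x. x \<in> Lam p \<Longrightarrow> g x \<in> m \<longleftrightarrow> x \<in> m"
    and x: "x \<in> Lam p"
  shows "beta (g x) = beta x"
proof -
  let ?t = "\<lambda>x. if x \<in> Lam p then beta (g x) else 0"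
  have "\<forall>x. x \<notin> m \<longrightarrow> ?t x = 0" using m_g beta_outside by auto
  hence "?t = beta"
    by (rule gamma_le_beta_imp_eq) (simp only: gamma_comp_automorphism[OF G inj g0 \<theta>_g])
  from fun_cong[OF this, of x] show ?thesis using x by simp
qed

lemma beta_comp_dihedral:
  assumes \<theta>_g: "\<And>x. x \<in> Lam p \<Longrightarrow> \<theta> (dihedral p sw sa sb x) = \<theta> x" and x: "x \<in> Lam p"
  shows "beta (dihedral p sw sa sb x) = beta x"
proof (rule beta_comp_automorphism[OF dihedral_Lam[OF p_pos] inj_on_dihedral[OF p_pos] dihedral_zero _ _ x])
  fix y z show "\<theta> (tdiff p (dihedral p sw sa sb y) (dihedral p sw sa sb z)) = \<theta> (tdiff p y z)"
    using \<theta>_g tdiff_Lam p_pos by (simp add: tdiff_dihedral)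
next
  fix y assume "y \<in> Lam p"
  obtain r where "m = mball p r" using m_M1 unfolding M1_def by auto
  thus "dihedral p sw sa sb y \<in> m \<longleftrightarrow> y \<in> m" using dihedral_mball[OF p_pos \<open>y \<in> Lam p\<close>] by simp
qed

lemma beta_Theta: "beta \<in> Theta p"
  unfolding Theta_def
proof (intro CollectI conjI allI impI)
  show "beta x = 0" if "x \<notin> Lam p" for x using that m_subset by (intro beta_outside) auto
  show "beta (0,0) = 0" using m_subset by (intro beta_outside) auto
  fix i j assume ij: "(i,j) \<in> Lam p"
  have "\<theta> (dihedral p False True True x) = \<theta> x" if "x \<in> Lam p" for x
    using Theta_symmetric[OF theta_Theta, of "fst x" "snd x"] that unfolding dihedral_def neg_if_def by simp
  from beta_comp_dihedral[OF this ij] show "beta (i,j) = beta (md p (- int i), md p (- int j))"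
    unfolding dihedral_def neg_if_def by simp
qed

lemma beta_Theta_m: "beta \<in> Theta_m p m"
  unfolding Theta_m_def using beta_Theta beta_outside by auto

lemma beta_ThetaPlus_m_rho: "2 \<le> \<rho> \<Longrightarrow> beta \<in> ThetaPlus_m_rho p m \<rho>"
  using norm1_beta_le norm1_theta beta_Theta_m beta_Theta
    IminusC_pos_def[OF p_pos, of beta] phi_max_IminusC_less[OF p_pos, of beta]
  unfolding ThetaPlus_m_rho_def ThetaPlus_m_def ThetaPlus_def by auto

lemma beta_Theta_iso:
  assumes iso: "\<theta> \<in> Theta_iso p"
  shows "beta \<in> Theta_iso p"
  unfolding Theta_iso_def
proof (intro CollectI conjI ballI beta_Theta)
  fix g x assume g: "g \<in> G_iso p" and x: "x \<in> Lam p"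
  then obtain sw sa sb where g_eq: "g = dihedral p sw sa sb" using G_iso_dihedral by blast
  have "\<theta> (dihedral p sw sa sb y) = \<theta> y" if "y \<in> Lam p" for y
    using iso g that unfolding Theta_iso_def g_eq by blast
  from beta_comp_dihedral[OF this x] show "beta (g x) = beta x" unfolding g_eq .
qed

lemma argmin_gamma_eq_beta:
  assumes "beta \<in> Y" and "Y \<subseteq> Theta_m p m"
  shows "{t. is_argmin_on (gamma p s2 \<theta>) Y t} = {beta}"
proof -
  have "\<forall>x. x \<notin> m \<longrightarrow> t x = 0" if "t \<in> Y" for t using that assms(2) unfolding Theta_m_def by auto
  thus ?thesis using assms(1) gamma_beta_le gamma_le_beta_imp_eq
    unfolding is_argmin_on_def by (auto intro: antisym)
qed

text \<open>By translation invariance every diagonal entry of \<open>C(f) \<Sigma> C(f)\<close> is the same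
  quadratic form; this turns the trace in the loss into \<open>p\<^sup>2\<close> times that form.\<close>

lemma diag_circ_S_circ:
  assumes f: "f \<in> Theta p" and i: "i < n"
  shows "(\<Sum>k<n. \<Sum>l<n. circ p f i k * S $$ (k,l) * circ p f l i)
       = qform n S (\<lambda>k. f (k div p, k mod p)) (\<lambda>k. f (k div p, k mod p))"
proof -
  let ?g = "translate p (i div p) (i mod p)"
  let ?\<pi> = "index_map p ?g"
  have G: "\<And>x. x \<in> Lam p \<Longrightarrow> ?g x \<in> Lam p" using translate_Lam[OF p_pos] by blast
  have \<pi>: "bij_betw ?\<pi> {..<n} {..<n}" by (rule bij_betw_index_map[OF G inj_on_translate[OF p_pos]])
  have S_\<pi>: "S $$ (?\<pi> k, ?\<pi> l) = S $$ (k,l)" if "k < n" "l < n" for k l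
    using S_index_map[OF G inj_on_translate[OF p_pos] _ that] tdiff_translate[OF p_pos] by simp
  have \<pi>_div_mod: "?\<pi> k div p = md p (int (k div p) + int (i div p)) \<and> ?\<pi> k mod p = md p (int (k mod p) + int (i mod p))"
    if "k < n" for k
    using index_map_div_mod[OF G that] unfolding translate_def by simp
  have row: "circ p f i (?\<pi> k) = f (k div p, k mod p)" if k: "k < n" for k
    unfolding circ_eq using \<pi>_div_mod[OF k] div_mod_less[OF k] by (simp add: md_translate_back[OF p_pos])
  have col: "circ p f (?\<pi> l) i = f (l div p, l mod p)" if l: "l < n" for l
  proof -
    have "circ p f (?\<pi> l) i = f (md p (- int (l div p)), md p (- int (l mod p)))"
      unfolding circ_eq using \<pi>_div_mod[OF l] by (simp add: md_translate_back_neg[OF p_pos])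
    also have "\<dots> = f (l div p, l mod p)" by (rule Theta_symmetric[OF f div_mod_in_Lam[OF l]])
    finally show ?thesis .
  qed
  have "(\<Sum>k<n. \<Sum>l<n. circ p f i k * S $$ (k,l) * circ p f l i)
      = (\<Sum>k<n. \<Sum>l<n. circ p f i (?\<pi> k) * S $$ (?\<pi> k, ?\<pi> l) * circ p f (?\<pi> l) i)"
    using sum.reindex_bij_betw[OF \<pi>, of "\<lambda>k. \<Sum>l<n. circ p f i k * S $$ (k,l) * circ p f l i"]
      sum.reindex_bij_betw[OF \<pi>, of "\<lambda>l. circ p f i (?\<pi> _) * S $$ (?\<pi> _, l) * circ p f l i"] by simp
  also have "\<dots> = qform n S (\<lambda>k. f (k div p, k mod p)) (\<lambda>k. f (k div p, k mod p))"
    unfolding qform_def by (intro sum.cong) (auto simp: row col S_\<pi>)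
  finally show ?thesis .
qed

lemma gamma_eq_gamma_theta_add:
  assumes t: "t \<in> Theta p"
  defines "d \<equiv> \<lambda>k. t (k div p, k mod p) - \<theta> (k div p, k mod p)"
  shows "gamma p s2 \<theta> t = gamma p s2 \<theta> \<theta> + qform n S d d"
proof -
  have t0: "t (0,0) = 0" "\<theta> (0,0) = 0" using t theta_Theta unfolding Theta_def by auto
  have a_\<theta>: "contrast_vec p \<theta> s = Q $$ (s,0)" if s: "s < n" for s
    using circ_sym[OF theta_Theta p_pos, of s 0] circ_zero[OF s] t0 Q_index[OF s] p_pos s
    unfolding contrast_vec_def by auto
  have "qform n S d (contrast_vec p \<theta>) = (\<Sum>r<n. d r * (\<Sum>s<n. S $$ (r,s) * Q $$ (s,0)))"
    unfolding qform_row by (intro sum.cong) (auto simp: a_\<theta>)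
  also have "\<dots> = (\<Sum>r<n. d r * (s2 * (K * Q) $$ (r,0)))"
    using p_pos by (intro sum.cong) (auto simp: index_mult_mat_sum[OF K_carrier Q_carrier] S_index sum_distrib_left mult.assoc)
  also have "\<dots> = 0"
    using K_inverse p_pos t0 unfolding d_def by (intro sum.neutral) auto
  finally have cross: "qform n S d (contrast_vec p \<theta>) = 0" .
  have "\<And>r. r < n \<Longrightarrow> contrast_vec p t r = contrast_vec p \<theta> r - d r"
    unfolding contrast_vec_def d_def using t0 by auto
  hence "gamma p s2 \<theta> t = qform n S (\<lambda>r. contrast_vec p \<theta> r - d r) (\<lambda>r. contrast_vec p \<theta> r - d r)"
    unfolding gamma_eq_qform by (intro qform_cong) auto
  also have "\<dots> = gamma p s2 \<theta> \<theta> + qform n S d d"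
    unfolding qform_diff gamma_eq_qform using cross qform_S_commute[of d "contrast_vec p \<theta>"] by simp
  finally show ?thesis .
qed

lemma loss_eq_gamma_diff:
  assumes t: "t \<in> Theta p"
  shows "loss p s2 \<theta> t \<theta> = gamma p s2 \<theta> t - gamma p s2 \<theta> \<theta>"
proof -
  define f where "f = (\<lambda>x. t x - \<theta> x)"
  have f: "f \<in> Theta p" unfolding f_def by (rule Theta_diff[OF t theta_Theta])
  define D where "D = Cmat p t - Cmat p \<theta>"
  have D: "D \<in> carrier_mat n n" unfolding D_def by (rule minus_carrier_mat[OF Cmat_carrier])
  have D_index: "D $$ (r,s) = circ p f r s" if "r < n" "s < n" for r s
    using that Cmat_carrier[of p \<theta>] unfolding D_def f_def by (simp add: Cmat_index circ_eq)
  have "(D * S * D) $$ (i,i) = qform n S (\<lambda>k. f (k div p, k mod p)) (\<lambda>k. f (k div p, k mod p))"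
    if i: "i < n" for i
  proof -
    have "(D * S * D) $$ (i,i) = (\<Sum>l<n. (D * S) $$ (i,l) * D $$ (l,i))"
      using D S_carrier by (intro index_mult_mat_sum[OF _ D i i]) simp
    also have "\<dots> = (\<Sum>l<n. (\<Sum>k<n. D $$ (i,k) * S $$ (k,l)) * D $$ (l,i))"
      by (rule sum.cong[OF refl]) (simp add: index_mult_mat_sum[OF D S_carrier i])
    also have "\<dots> = (\<Sum>k<n. \<Sum>l<n. circ p f i k * S $$ (k,l) * circ p f l i)"
      by (subst sum.swap) (auto simp: sum_distrib_right D_index i intro!: sum.cong)
    finally show ?thesis using diag_circ_S_circ[OF f i] by simp
  qed
  moreover have "dim_row (D * S * D) = n" using D by simp
  ultimately have "loss p s2 \<theta> t \<theta> = qform n S (\<lambda>k. f (k div p, k mod p)) (\<lambda>k. f (k div p, k mod p))"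
    unfolding loss_def mtrace_def D_def[symmetric] using p_pos by (simp add: power2_eq_square)
  thus ?thesis using gamma_eq_gamma_theta_add[OF t] unfolding f_def by simp
qed

lemma theta_proj_eq_beta:
  assumes "beta \<in> X" and X: "X \<subseteq> Theta_m p m"
  shows "theta_proj p s2 \<theta> X = beta"
proof -
  have "closure X \<subseteq> Theta_m p m" using closure_minimal[OF X Theta_m_closed] .
  hence cl: "t \<in> Theta p" "\<forall>x. x \<notin> m \<longrightarrow> t x = 0" if "t \<in> closure X" for t
    using that unfolding Theta_m_def by auto
  have beta: "beta \<in> closure X" using assms(1) closure_subset by blast
  have loss: "loss p s2 \<theta> t \<theta> - loss p s2 \<theta> beta \<theta> = gamma p s2 \<theta> t - gamma p s2 \<theta> beta"
    if "t \<in> closure X" for t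
    using loss_eq_gamma_diff cl[OF that] cl[OF beta] by simp
  show ?thesis unfolding theta_proj_def
  proof (rule the_equality)
    show "is_argmin_on (\<lambda>t'. loss p s2 \<theta> t' \<theta>) (closure X) beta"
      unfolding is_argmin_on_def
    proof (intro conjI ballI beta)
      fix y assume y: "y \<in> closure X"
      show "loss p s2 \<theta> beta \<theta> \<le> loss p s2 \<theta> y \<theta>" using loss[OF y] gamma_beta_le[OF cl(2)[OF y]] by simp
    qed
    fix t assume "is_argmin_on (\<lambda>t'. loss p s2 \<theta> t' \<theta>) (closure X) t"
    hence t: "t \<in> closure X" and "loss p s2 \<theta> t \<theta> \<le> loss p s2 \<theta> beta \<theta>"
      using beta unfolding is_argmin_on_def by auto
    hence "gamma p s2 \<theta> t \<le> gamma p s2 \<theta> beta" using loss[OF t] by simp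
    thus "t = beta" by (rule gamma_le_beta_imp_eq[OF cl(2)[OF t]])
  qed
qed

lemma cond_var_eq: "cond_var p s2 \<theta> m = S $$ (0,0) - (\<Sum>s<n. bvec s * S $$ (0,s))"
proof -
  define V where "V = submatrix S {0} M"
  have V: "V \<in> carrier_mat 1 k" unfolding V_def submatrix_def using card_rows_cols by simp
  have V_index: "V $$ (0,a) = S $$ (0, pick M a)" if "a < k" for a
    unfolding V_def using that submatrix_index[of 0 S "{0}" a M] card_rows_cols by simp
  have "(V * minv T * U) $$ (0,0) = (V * W) $$ (0,0)"
    using assoc_mult_mat[OF V _ U_carrier, of "minv T"] minv_T by simp
  also have "\<dots> = (\<Sum>a<k. W $$ (a,0) * S $$ (0, pick M a))"
    using index_mult_mat_sum[OF V W_carrier, of 0 0] V_index by (simp add: mult.commute)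
  also have "\<dots> = (\<Sum>s<n. bvec s * S $$ (0,s))" unfolding bvec_def by (rule sum_lift_mult[symmetric])
  finally show ?thesis unfolding cond_var_def Let_def V_def by simp
qed

lemma cond_var_eq_gamma_beta: "cond_var p s2 \<theta> m = gamma p s2 \<theta> beta"
proof -
  let ?a = "contrast_vec p beta"
  have n: "0 < n" using p_pos by simp
  have "?a r * (\<Sum>s<n. S $$ (r,s) * ?a s) = 0" if "r \<in> {..<n} - {0}" for r
    using that residual_orthogonal contrast_vec_beta bvec_outside by (cases "r \<in> M") auto
  hence "(\<Sum>r\<in>{..<n} - {0}. ?a r * (\<Sum>s<n. S $$ (r,s) * ?a s)) = 0" by (rule sum.neutral[OF ballI])
  moreover have "gamma p s2 \<theta> beta = ?a 0 * (\<Sum>s<n. S $$ (0,s) * ?a s) + (\<Sum>r\<in>{..<n} - {0}. ?a r * (\<Sum>s<n. S $$ (r,s) * ?a s))"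
    unfolding gamma_eq_qform qform_row using n by (subst sum.remove[of _ 0]) auto
  ultimately have "gamma p s2 \<theta> beta = ?a 0 * (\<Sum>s<n. S $$ (0,s) * ?a s)" by simp
  also have "\<dots> = (\<Sum>s<n. S $$ (0,s) * ?a s)" by (simp add: contrast_vec_def)
  also have "\<dots> = (\<Sum>s<n. (if s = 0 then S $$ (0,s) else 0) - bvec s * S $$ (0,s))"
    by (rule sum.cong) (auto simp: contrast_vec_beta algebra_simps)
  also have "\<dots> = S $$ (0,0) - (\<Sum>s<n. bvec s * S $$ (0,s))"
    using n by (simp add: sum_subtractf)
  finally show ?thesis by (simp add: cond_var_eq)
qed

end

theorem mainTheorem5:
  fixes p :: nat and s2 \<rho>1 :: real and \<theta> :: "nat \<times> nat \<Rightarrow> real" and m :: "(nat \<times> nat) set"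
  assumes "p \<ge> 2" and "s2 > 0" and "\<rho>1 \<ge> 2"
    and "\<theta> \<in> ThetaPlus p" and "norm1 p \<theta> < 1" and "m \<in> M1 p"
  shows "(\<exists>t \<in> ThetaPlus_m_rho p m 2. is_argmin_on (gamma p s2 \<theta>) (Theta_m p m) t)
       \<and> {t. is_argmin_on (gamma p s2 \<theta>) (Theta_m p m) t}
            = {theta_proj p s2 \<theta> (ThetaPlus_m_rho p m \<rho>1)}
       \<and> gamma p s2 \<theta> (theta_proj p s2 \<theta> (ThetaPlus_m_rho p m \<rho>1)) = cond_var p s2 \<theta> m
       \<and> norm1 p (theta_proj p s2 \<theta> (ThetaPlus_m_rho p m \<rho>1)) \<le> norm1 p \<theta>
       \<and> (\<theta> \<in> Theta_iso p \<longrightarrow>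
           (\<exists>t \<in> ThetaPlus_m_rho p m 2 \<inter> Theta_iso p.
               is_argmin_on (gamma p s2 \<theta>) (Theta_m p m \<inter> Theta_iso p) t)
         \<and> {t. is_argmin_on (gamma p s2 \<theta>) (Theta_m p m \<inter> Theta_iso p) t}
            = {theta_proj p s2 \<theta> (ThetaPlus_m_rho p m \<rho>1 \<inter> Theta_iso p)}
         \<and> gamma p s2 \<theta> (theta_proj p s2 \<theta> (ThetaPlus_m_rho p m \<rho>1 \<inter> Theta_iso p))
             = cond_var p s2 \<theta> m
         \<and> norm1 p (theta_proj p s2 \<theta> (ThetaPlus_m_rho p m \<rho>1 \<inter> Theta_iso p)) \<le> norm1 p \<theta>)"
proof -
  interpret torus_regression p s2 \<theta> m using assms(1,2,4,5,6) by unfold_locales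
  have sub: "ThetaPlus_m_rho p m \<rho>1 \<subseteq> Theta_m p m"
    unfolding ThetaPlus_m_rho_def ThetaPlus_m_def by auto
  have beta: "beta \<in> ThetaPlus_m_rho p m 2" "beta \<in> ThetaPlus_m_rho p m \<rho>1"
    using beta_ThetaPlus_m_rho assms(3) by auto
  have proj: "theta_proj p s2 \<theta> (ThetaPlus_m_rho p m \<rho>1) = beta"
    by (rule theta_proj_eq_beta[OF beta(2) sub])
  have argmin: "{t. is_argmin_on (gamma p s2 \<theta>) (Theta_m p m) t} = {beta}"
    by (rule argmin_gamma_eq_beta[OF beta_Theta_m order_refl])
  have proj_iso: "theta_proj p s2 \<theta> (ThetaPlus_m_rho p m \<rho>1 \<inter> Theta_iso p) = beta"
    and argmin_iso: "{t. is_argmin_on (gamma p s2 \<theta>) (Theta_m p m \<inter> Theta_iso p) t} = {beta}"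
    if "\<theta> \<in> Theta_iso p"
    using theta_proj_eq_beta argmin_gamma_eq_beta beta(2) sub beta_Theta_m beta_Theta_iso[OF that] by auto
  have "is_argmin_on (gamma p s2 \<theta>) (Theta_m p m) beta"
    "\<theta> \<in> Theta_iso p \<Longrightarrow> is_argmin_on (gamma p s2 \<theta>) (Theta_m p m \<inter> Theta_iso p) beta"
    using argmin argmin_iso by blast+
  thus ?thesis
    using beta beta_Theta_iso
    by (auto simp: proj proj_iso argmin argmin_iso cond_var_eq_gamma_beta norm1_beta_le)
qed

end
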